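(* Let $\mathcal{A}$ be a pOC with state set $Q$ and let $p,q\in Q$ be such that $[p{\downarrow}q]>0$ and $q$ lies in a bottom strongly connected component $B$ of $\mathcal{X}$ whose trend $t$ satisfies $t\neq0$. Then $$E(p{\downarrow}q)\le 85000\cdot\frac{|Q|^6}{x_{\min}^{5|Q|+|Q|^3}\cdot t^4}.$$
   Context: A pOC is $\mathcal{A}=(Q,\delta^{=0},\delta^{>0},P^{=0},P^{>0})$ with the following components. - $\delta^{>0}\subseteq Q\times\{-1,0,1\}\times Q$ are the positive rules and $\delta^{=0}\subseteq Q\times\{0,1\}\times Q$ are the zero rules. Every state has both kinds of outgoing rule. - $P^{>0}$ and $P^{=0}$ are positive rational probability distributions over the outgoing rules of each state. $\mathcal{M}_\mathcal{A}$ is the Markov chain on configurations $p(i)$ with the following transitions: - $p(0)\to q(c)$ with probability $P^{=0}(p,c,q)$; - for $i\ge1$, $p(i)\to q(i+c)$ with probability $P^{>0}(p,c,q)$. $\mathrm{Run}(p{\downarrow}q)$ is the set of runs from $p(1)$ that visit $q(0)$ with the counter positive before that visit. $[p{\downarrow}q]$ is its probability, and $E(p{\downarrow}q)$ is the conditional expected number of transitions until the first visit of $q(0)$ given $\mathrm{Run}(p{\downarrow}q)$. $\mathcal{X}$ is the finite Markov chain on $Q$ with transition matrix $A_{pq}=\sum_c P^{>0}(p,c,q)$. For a bottom strongly connected component $B$ of $\mathcal{X}$, let $\alpha$ be the (unique) invariant distribution of $\mathcal{X}$ restricted to $B$. For $r\in B$ let $s_r=\sum_{(r,c,r')\in\delta^{>0}}P^{>0}(r,c,r')\cdot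 c$. The trend of $B$ is $t=\sum_{r\in B}\alpha_r s_r$. $x_{\min}$ is the least positive probability used in the rules of $\mathcal{A}$. *)

theory Defs
  imports "HOL-Analysis.Analysis"
begin

text \<open>Rules are triples (p, c, q); the probability assignments are given as functions
  that are positive exactly on the rules and vanish elsewhere.\<close>

definition pOC ::
  "('q::finite \<times> int \<times> 'q) set \<Rightarrow> ('q \<times> int \<times> 'q) set \<Rightarrow>
   ('q \<Rightarrow> int \<Rightarrow> 'q \<Rightarrow> real) \<Rightarrow> ('q \<Rightarrow> int \<Rightarrow> 'q \<Rightarrow> real) \<Rightarrow> bool" where
  "pOC dz dp Pz Pp \<longleftrightarrow>
     dp \<subseteq> {(p, c, q). c \<in> {-1, 0, 1}} \<and>
     dz \<subseteq> {(p, c, q). c \<in> {0, 1}} \<and>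
     (\<forall>p. \<exists>c q. (p, c, q) \<in> dp) \<and>
     (\<forall>p. \<exists>c q. (p, c, q) \<in> dz) \<and>
     (\<forall>p c q. (p, c, q) \<in> dp \<longrightarrow> Pp p c q > 0 \<and> Pp p c q \<in> \<rat>) \<and>
     (\<forall>p c q. (p, c, q) \<in> dz \<longrightarrow> Pz p c q > 0 \<and> Pz p c q \<in> \<rat>) \<and>
     (\<forall>p c q. (p, c, q) \<notin> dp \<longrightarrow> Pp p c q = 0) \<and>
     (\<forall>p c q. (p, c, q) \<notin> dz \<longrightarrow> Pz p c q = 0) \<and>
     (\<forall>p. (\<Sum>(c, q) \<in> {-1, 0, 1} \<times> UNIV. Pp p c q) = 1) \<and>
     (\<forall>p. (\<Sum>(c, q) \<in> {0, 1} \<times> UNIV. Pz p c q) = 1)"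

definition trans_prob ::
  "('q \<Rightarrow> int \<Rightarrow> 'q \<Rightarrow> real) \<Rightarrow> ('q \<Rightarrow> int \<Rightarrow> 'q \<Rightarrow> real) \<Rightarrow>
   ('q \<times> nat) \<Rightarrow> ('q \<times> nat) \<Rightarrow> real" where
  "trans_prob Pz Pp x y =
     (if snd x = 0 then Pz (fst x) (int (snd y) - int (snd x)) (fst y)
      else Pp (fst x) (int (snd y) - int (snd x)) (fst y))"

text \<open>first_hit Pz Pp q n x: probability that the run from configuration x
  reaches q(0) after exactly n transitions, with the counter positive at all
  configurations before (i.e. q(0) is the first configuration with counter zero).
  Only configurations with counter at most i+1 are reachable in one step from i.\<close>

fun first_hit ::
  "('q::finite \<Rightarrow> int \<Rightarrow> 'q \<Rightarrow> real) \<Rightarrow> ('q \<Rightarrow> int \<Rightarrow> 'q \<Rightarrow> real) \<Rightarrow>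
   'q \<Rightarrow> nat \<Rightarrow> ('q \<times> nat) \<Rightarrow> real" where
  "first_hit Pz Pp q 0 x = (if x = (q, 0) then 1 else 0)"
| "first_hit Pz Pp q (Suc n) x =
     (if snd x = 0 then 0
      else (\<Sum>y \<in> UNIV \<times> {..snd x + 1}. trans_prob Pz Pp x y * first_hit Pz Pp q n y))"

definition term_prob where
  "term_prob Pz Pp p q = (\<Sum>n. first_hit Pz Pp q n (p, 1))"

text \<open>Conditional expected termination time E(p\<down>q); finiteness is stated separately
  (summability of the series below).\<close>
definition exp_time where
  "exp_time Pz Pp p q = (\<Sum>n. real n * first_hit Pz Pp q n (p, 1)) / term_prob Pz Pp p q"

definition X_mat :: "('q \<Rightarrow> int \<Rightarrow> 'q \<Rightarrow> real) \<Rightarrow> 'q \<Rightarrow> 'q \<Rightarrow> real" where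
  "X_mat Pp p q = (\<Sum>c \<in> {-1, 0, 1}. Pp p c q)"

definition X_edges where
  "X_edges Pp = {(p, q). X_mat Pp p q > 0}"

definition is_bscc :: "('q \<Rightarrow> int \<Rightarrow> 'q \<Rightarrow> real) \<Rightarrow> 'q set \<Rightarrow> bool" where
  "is_bscc Pp B \<longleftrightarrow> B \<noteq> {} \<and>
     (\<forall>r \<in> B. \<forall>r'. (r, r') \<in> X_edges Pp \<longrightarrow> r' \<in> B) \<and>
     (\<forall>r \<in> B. \<forall>r' \<in> B. (r, r') \<in> (X_edges Pp)\<^sup>*)"

definition is_inv_dist :: "('q::finite \<Rightarrow> int \<Rightarrow> 'q \<Rightarrow> real) \<Rightarrow> 'q set \<Rightarrow> ('q \<Rightarrow> real) \<Rightarrow> bool" where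
  "is_inv_dist Pp B \<alpha> \<longleftrightarrow>
     (\<forall>r \<in> B. \<alpha> r \<ge> 0) \<and> (\<Sum>r \<in> B. \<alpha> r) = 1 \<and>
     (\<forall>r' \<in> B. (\<Sum>r \<in> B. \<alpha> r * X_mat Pp r r') = \<alpha> r')"

definition drift :: "('q \<Rightarrow> int \<Rightarrow> 'q \<Rightarrow> real) \<Rightarrow> 'q \<Rightarrow> real" where
  "drift Pp r = (\<Sum>(c, r') \<in> {-1, 0, 1} \<times> UNIV. Pp r c r' * of_int c)"

definition trend :: "('q::finite \<Rightarrow> int \<Rightarrow> 'q \<Rightarrow> real) \<Rightarrow> 'q set \<Rightarrow> ('q \<Rightarrow> real) \<Rightarrow> real" where
  "trend Pp B \<alpha> = (\<Sum>r \<in> B. \<alpha> r * drift Pp r)"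

definition x_min where
  "x_min dz dp Pz Pp =
     Min ({Pp p c q | p c q. (p, c, q) \<in> dp} \<union> {Pz p c q | p c q. (p, c, q) \<in> dz})"

end

(*
  Lower bound on [p\<down>q]: a run of positive probability from p(1) to q(0) can be shortened
  by removing cycles and by pumping down pairs of nested level crossings (the counter
  enters level l and then l' > l in the same state on the way up, and leaves l' and then l
  in the same state on the way down).  A shortest such run therefore stays below height
  |Q|^2, visits no configuration twice, has length at most |Q|^3, and has probability at
  least x_min^(|Q|^3).

  Upper bound on the series \<Sum>n. n \<cdot> P(q(0) is first reached after n steps): inside B, solve
  the Poisson equation g = drift - t + X g; both this and the later systems are of the form
  h = b + X h on a set that X can leave, whose solutions exist and are bounded by
  |S| \<cdot> max|b| / x_min^|S|.  With g, the process exp(\<mu>(counter + g(state)) - \<lambda>n) is a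
  supermartingale for a suitable \<mu> of the sign opposite to t, so from B the probability of
  terminating after n \<ge> 4 \<cdot> counter / |t| steps decays geometrically.  Outside B the bound is
  propagated through the remaining states that reach q by one more such system.
*)

theory Submission
  imports Defs
begin

lemma sum_pos_imp_ex_pos:
  fixes f :: "'a \<Rightarrow> 'b::{ordered_comm_monoid_add, linorder}"
  shows "0 < sum f A \<Longrightarrow> \<exists>a\<in>A. 0 < f a"
  by (meson not_le sum_nonpos)

locale poc =
  fixes dz dp :: "('q::finite \<times> int \<times> 'q) set"
    and Pz Pp :: "'q \<Rightarrow> int \<Rightarrow> 'q \<Rightarrow> real"
  assumes pOC: "pOC dz dp Pz Pp"
begin

abbreviation xm :: real where "xm \<equiv> x_min dz dp Pz Pp"

abbreviation hit :: "'q \<Rightarrow> nat \<Rightarrow> 'q \<times> nat \<Rightarrow> real" where "hit \<equiv> first_hit Pz Pp"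

lemma Pp_eq_0_if_not_rule: "(r, c, r') \<notin> dp \<Longrightarrow> Pp r c r' = 0"
  using pOC unfolding pOC_def by blast

lemma Pp_nonneg: "Pp r c r' \<ge> 0"
  using pOC unfolding pOC_def by (cases "(r, c, r') \<in> dp") (auto simp: less_imp_le)

lemma rule_if_Pp_pos: "Pp r c r' > 0 \<Longrightarrow> (r, c, r') \<in> dp"
  using Pp_eq_0_if_not_rule by force

lemma step_if_Pp_pos: "Pp r c r' > 0 \<Longrightarrow> c \<in> {-1, 0, 1}"
proof -
  assume "Pp r c r' > 0"
  then have "(r, c, r') \<in> dp" by (rule rule_if_Pp_pos)
  moreover have "dp \<subseteq> {(p, c, q). c \<in> {-1, 0, 1}}" using pOC unfolding pOC_def by blast
  ultimately show ?thesis by blast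
qed

lemma Pp_eq_0_if_not_step: "c \<notin> {-1, 0, 1} \<Longrightarrow> Pp r c r' = 0"
  using step_if_Pp_pos[of r c r'] Pp_nonneg[of r c r'] by force

lemma Pp_row_sum: "(\<Sum>r'\<in>UNIV. \<Sum>c\<in>{-1,0,1}. Pp r c r') = 1"
proof -
  have "(\<Sum>(c, r') \<in> {-1, 0, 1} \<times> (UNIV::'q set). Pp r c r') = 1"
    using pOC unfolding pOC_def by blast
  then have "(\<Sum>c\<in>{-1,0,1}. \<Sum>r'\<in>UNIV. Pp r c r') = 1"
    by (simp add: sum.cartesian_product)
  then show ?thesis by (subst sum.swap) simp
qed

lemma Pp_le_1: "Pp r c r' \<le> 1"
proof (cases "c \<in> {-1,0,1}")
  case True
  have "Pp r c r' \<le> (\<Sum>c\<in>{-1,0,1}. Pp r c r')"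
    by (rule member_le_sum) (use True Pp_nonneg in auto)
  also have "\<dots> \<le> (\<Sum>r''\<in>UNIV. \<Sum>c\<in>{-1,0,1}. Pp r c r'')"
    by (rule member_le_sum) (auto simp: Pp_nonneg add_nonneg_nonneg)
  finally show ?thesis using Pp_row_sum by simp
qed (simp add: Pp_eq_0_if_not_step)

lemma X_mat_nonneg: "X_mat Pp r r' \<ge> 0"
  unfolding X_mat_def by (intro sum_nonneg Pp_nonneg)

lemma X_mat_row_sum: "(\<Sum>r'\<in>UNIV. X_mat Pp r r') = 1"
  unfolding X_mat_def using Pp_row_sum by simp

lemma X_mat_sum_le_1: "(\<Sum>r'\<in>A. X_mat Pp r r') \<le> 1"
proof -
  have "(\<Sum>r'\<in>A. X_mat Pp r r') \<le> (\<Sum>r'\<in>UNIV. X_mat Pp r r')"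
    by (rule sum_mono2) (auto simp: X_mat_nonneg)
  then show ?thesis using X_mat_row_sum by simp
qed

lemma X_mat_sum_remove: "(\<Sum>r'\<in>UNIV - {r1}. X_mat Pp r r') = 1 - X_mat Pp r r1"
  using X_mat_row_sum[of r] sum_diff1[of UNIV "X_mat Pp r" r1] by simp

lemma Pp_le_X_mat: "c \<in> {-1, 0, 1} \<Longrightarrow> Pp r c r' \<le> X_mat Pp r r'"
  unfolding X_mat_def by (rule member_le_sum) (auto simp: Pp_nonneg)

lemma X_edge_if_Pp_pos: "Pp r c r' > 0 \<Longrightarrow> (r, r') \<in> X_edges Pp"
proof -
  assume pos: "Pp r c r' > 0"
  then have "Pp r c r' \<le> X_mat Pp r r'" by (intro Pp_le_X_mat step_if_Pp_pos)
  then show ?thesis using pos unfolding X_edges_def by simp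
qed

lemma drift_eq_sum: "drift Pp r = (\<Sum>r'\<in>UNIV. \<Sum>c\<in>{-1,0,1}. Pp r c r' * of_int c)"
proof -
  have "drift Pp r = (\<Sum>c\<in>{-1,0,1}. \<Sum>r'\<in>UNIV. Pp r c r' * of_int c)"
    unfolding drift_def by (simp add: sum.cartesian_product)
  then show ?thesis by (subst sum.swap) simp
qed

lemma abs_drift_le_1: "\<bar>drift Pp r\<bar> \<le> 1"
proof -
  have "\<bar>drift Pp r\<bar> \<le> (\<Sum>r'\<in>UNIV. \<bar>\<Sum>c\<in>{-1,0,1}. Pp r c r' * of_int c\<bar>)"
    unfolding drift_eq_sum by (rule sum_abs)
  also have "\<dots> \<le> (\<Sum>r'\<in>UNIV. \<Sum>c\<in>{-1,0,1}. Pp r c r')"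
    by (intro sum_mono) (use Pp_nonneg in \<open>simp add: abs_le_iff\<close>)
  finally show ?thesis using Pp_row_sum by simp
qed

lemma finite_rule_probs:
  "finite ({Pp p c q | p c q. (p, c, q) \<in> dp} \<union> {Pz p c q | p c q. (p, c, q) \<in> dz})"
proof -
  have "dp \<subseteq> UNIV \<times> {-1,0,1} \<times> UNIV" "dz \<subseteq> UNIV \<times> {0,1} \<times> UNIV"
    using pOC unfolding pOC_def by auto
  then have "finite dp" "finite dz" by (auto intro: finite_subset)
  moreover have "{Pp p c q | p c q. (p, c, q) \<in> dp} = (\<lambda>(p,c,q). Pp p c q) ` dp"
    and "{Pz p c q | p c q. (p, c, q) \<in> dz} = (\<lambda>(p,c,q). Pz p c q) ` dz" by force+
  ultimately show ?thesis by simp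
qed

lemma x_min_le_Pp: "Pp r c r' > 0 \<Longrightarrow> xm \<le> Pp r c r'"
  unfolding x_min_def by (rule Min_le[OF finite_rule_probs]) (blast dest: rule_if_Pp_pos)

lemma x_min_pos: "xm > 0"
proof -
  have "\<exists>c r'. (undefined, c, r') \<in> dp" using pOC unfolding pOC_def by blast
  then have "{Pp p c q | p c q. (p, c, q) \<in> dp} \<union> {Pz p c q | p c q. (p, c, q) \<in> dz} \<noteq> {}"
    by blast
  moreover have "\<forall>a \<in> {Pp p c q | p c q. (p, c, q) \<in> dp} \<union> {Pz p c q | p c q. (p, c, q) \<in> dz}. a > 0"
    using pOC unfolding pOC_def by auto
  ultimately show ?thesis unfolding x_min_def using Min_in[OF finite_rule_probs] by blast
qed

lemma x_min_le_1: "xm \<le> 1"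
proof -
  have "\<exists>c r'. (undefined, c, r') \<in> dp" using pOC unfolding pOC_def by blast
  then obtain r c r' where "(r, c, r') \<in> dp" by blast
  then have "Pp r c r' > 0" using pOC unfolding pOC_def by blast
  then show ?thesis using x_min_le_Pp Pp_le_1 order_trans by blast
qed

lemma x_min_pow_antimono: "m \<le> n \<Longrightarrow> xm ^ n \<le> xm ^ m"
  using x_min_pos x_min_le_1 by (intro power_decreasing) auto

lemma x_min_le_X_mat: "X_mat Pp r r' > 0 \<Longrightarrow> xm \<le> X_mat Pp r r'"
proof -
  assume "X_mat Pp r r' > 0"
  then obtain c where c: "c \<in> {-1,0,1}" "Pp r c r' > 0"
    unfolding X_mat_def by (blast dest: sum_pos_imp_ex_pos)
  then show ?thesis using x_min_le_Pp Pp_le_X_mat order_trans by blast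
qed

lemma sum_counter_neighbours:
  fixes F :: "nat \<Rightarrow> real"
  assumes "i > 0"
  shows "(\<Sum>j\<le>i+1. Pp r (int j - int i) r' * F j) = (\<Sum>c\<in>{-1,0,1}. Pp r c r' * F (nat (int i + c)))"
proof -
  have split: "{..i+1} = {i-1, i, i+1} \<union> {..<i-1}" using assms by auto
  have "(\<Sum>j<i-1. Pp r (int j - int i) r' * F j) = 0"
  proof (intro sum.neutral ballI)
    fix j assume "j \<in> {..<i-1}"
    then have "int j - int i \<notin> {-1,0,1}" by auto
    then show "Pp r (int j - int i) r' * F j = 0" by (simp add: Pp_eq_0_if_not_step)
  qed
  then have "(\<Sum>j\<le>i+1. Pp r (int j - int i) r' * F j) =
        (\<Sum>j\<in>{i-1, i, i+1}. Pp r (int j - int i) r' * F j)"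
    unfolding split by (subst sum.union_disjoint) auto
  also have "\<dots> = Pp r (-1) r' * F (i-1) + Pp r 0 r' * F i + Pp r 1 r' * F (i+1)"
    using assms by (cases i) (simp_all add: algebra_simps)
  also have "\<dots> = (\<Sum>c\<in>{-1,0,1}. Pp r c r' * F (nat (int i + c)))"
    using assms by (simp add: nat_diff_distrib' nat_add_distrib)
  finally show ?thesis .
qed

lemma first_hit_Suc_pos:
  assumes "i > 0"
  shows "hit q (Suc m) (r, i) =
    (\<Sum>r'\<in>UNIV. \<Sum>c\<in>{-1,0,1}. Pp r c r' * hit q m (r', nat (int i + c)))"
proof -
  have "hit q (Suc m) (r, i) = (\<Sum>y \<in> UNIV \<times> {..i + 1}. trans_prob Pz Pp (r, i) y * hit q m y)"
    using assms by simp
  also have "\<dots> = (\<Sum>r'\<in>UNIV. \<Sum>j\<le>i+1. Pp r (int j - int i) r' * hit q m (r', j))"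
    using assms by (simp only: sum.cartesian_product' trans_prob_def fst_conv snd_conv) simp
  finally show ?thesis by (simp only: sum_counter_neighbours[OF assms])
qed

lemma first_hit_Suc_0 [simp]: "hit q (Suc m) (r, 0) = 0"
  by simp

declare first_hit.simps(2) [simp del]

lemma first_hit_nonneg: "hit q m y \<ge> 0"
proof (induction m arbitrary: y)
  case (Suc m)
  obtain r i where y: "y = (r, i)" by fastforce
  show ?case
  proof (cases "i = 0")
    case False
    then show ?thesis unfolding y using Suc
      by (subst first_hit_Suc_pos) (auto intro!: sum_nonneg mult_nonneg_nonneg simp: Pp_nonneg)
  qed (use y in simp)
qed simp

lemma first_hit_partial_sum_le_1: "(\<Sum>m\<le>M. hit q m y) \<le> 1"
proof (induction M arbitrary: y)
  case (Suc M)
  obtain r i where y: "y = (r, i)" by fastforce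
  have "(\<Sum>m\<le>Suc M. hit q m y) = hit q 0 y + (\<Sum>m\<le>M. hit q (Suc m) y)"
    by (subst sum.atMost_Suc_shift) simp
  show ?case
  proof (cases "i = 0")
    case True
    then show ?thesis using \<open>_ = hit q 0 y + _\<close> y by simp
  next
    case False
    then have "(\<Sum>m\<le>Suc M. hit q m y) =
        (\<Sum>m\<le>M. \<Sum>r'\<in>UNIV. \<Sum>c\<in>{-1,0,1}. Pp r c r' * hit q m (r', nat (int i + c)))"
      using \<open>_ = hit q 0 y + _\<close> y by (simp add: first_hit_Suc_pos)
    also have "\<dots> = (\<Sum>r'\<in>UNIV. \<Sum>c\<in>{-1,0,1}. Pp r c r' * (\<Sum>m\<le>M. hit q m (r', nat (int i + c))))"
      by (simp add: sum_distrib_left sum.swap[of _ "{..M}"])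
    also have "\<dots> \<le> (\<Sum>r'\<in>UNIV. \<Sum>c\<in>{-1,0,1}. Pp r c r' * 1)"
      by (intro sum_mono mult_left_mono Suc.IH Pp_nonneg)
    finally show ?thesis using Pp_row_sum by simp
  qed
qed simp

lemma summable_first_hit: "summable (\<lambda>m. hit q m y)"
proof (rule summableI_nonneg_bounded[where x=1])
  show "(\<Sum>i<n. hit q i y) \<le> 1" for n
    using first_hit_partial_sum_le_1[where M="n - 1"] by (cases n) (auto simp: lessThan_Suc_atMost)
qed (simp add: first_hit_nonneg)

lemma first_hit_eq_0_if_unreachable:
  assumes "(r, q) \<notin> (X_edges Pp)\<^sup>*"
  shows "hit q m (r, i) = 0"
  using assms
proof (induction m arbitrary: r i)
  case (Suc m)
  have "Pp r c r' * hit q m (r', nat (int i + c)) = 0" for r' c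
  proof (cases "Pp r c r' > 0")
    case True
    then have "(r', q) \<notin> (X_edges Pp)\<^sup>*"
      using Suc.prems X_edge_if_Pp_pos by (meson converse_rtrancl_into_rtrancl)
    then show ?thesis using Suc.IH by simp
  qed (use Pp_nonneg[of r c r'] in simp)
  then have "(\<Sum>r'\<in>UNIV. \<Sum>c\<in>{-1,0,1}. Pp r c r' * hit q m (r', nat (int i + c))) = 0"
    by (intro sum.neutral ballI)
  then show ?case by (cases "i = 0") (simp_all only: first_hit_Suc_pos first_hit_Suc_0 neq0_conv)
qed auto

lemma weighted_partial_sum_Suc:
  assumes "i > 0"
  shows "(\<Sum>m\<le>Suc M. real m * hit q m (r, i)) =
    (\<Sum>r'\<in>UNIV. \<Sum>c\<in>{-1,0,1}. Pp r c r' *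
        ((\<Sum>m\<le>M. real m * hit q m (r', nat (int i + c))) + (\<Sum>m\<le>M. hit q m (r', nat (int i + c)))))"
proof -
  have "(\<Sum>m\<le>Suc M. real m * hit q m (r, i)) = (\<Sum>m\<le>M. real (Suc m) * hit q (Suc m) (r, i))"
    by (subst sum.atMost_Suc_shift) simp
  also have "\<dots> = (\<Sum>m\<le>M. \<Sum>r'\<in>UNIV. \<Sum>c\<in>{-1,0,1}.
        Pp r c r' * (real m * hit q m (r', nat (int i + c)) + hit q m (r', nat (int i + c))))"
    by (simp add: first_hit_Suc_pos[OF assms] sum_distrib_left algebra_simps)
  also have "\<dots> = (\<Sum>r'\<in>UNIV. \<Sum>c\<in>{-1,0,1}. \<Sum>m\<le>M.
        Pp r c r' * (real m * hit q m (r', nat (int i + c)) + hit q m (r', nat (int i + c))))"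
    by (subst sum.swap, rule sum.cong[OF refl], rule sum.swap)
  finally show ?thesis by (simp only: sum_distrib_left[symmetric] sum.distrib)
qed

end

lemma nat_ivt_up:
  fixes h :: "nat \<Rightarrow> nat"
  assumes "a \<le> b" "h a \<le> v" "v \<le> h b" "\<forall>k. a \<le> k \<longrightarrow> k < b \<longrightarrow> h (Suc k) \<le> h k + 1"
  shows "\<exists>k. a \<le> k \<and> k \<le> b \<and> h k = v"
  using assms
proof (induction b)
  case 0 then show ?case by auto
next
  case (Suc b)
  show ?case
  proof (cases "a = Suc b")
    case True then show ?thesis using Suc.prems by auto
  next
    case False
    then have ab: "a \<le> b" using Suc.prems by simp
    show ?thesis
    proof (cases "v \<le> h b")
      case True
      then obtain k where "a \<le> k \<and> k \<le> b \<and> h k = v" using Suc.IH[OF ab] Suc.prems by auto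
      then show ?thesis by auto
    next
      case False
      then have "h (Suc b) \<le> h b + 1" using Suc.prems ab by auto
      then have "h (Suc b) = v" using False Suc.prems by simp
      then show ?thesis using Suc.prems by auto
    qed
  qed
qed

lemma nat_ivt_down:
  fixes h :: "nat \<Rightarrow> nat"
  assumes "a \<le> b" "h b \<le> v" "v \<le> h a" "\<forall>k. a \<le> k \<longrightarrow> k < b \<longrightarrow> h k \<le> h (Suc k) + 1"
  shows "\<exists>k. a \<le> k \<and> k \<le> b \<and> h k = v"
  using assms
proof (induction b)
  case 0 then show ?case by auto
next
  case (Suc b)
  show ?case
  proof (cases "a = Suc b")
    case True then show ?thesis using Suc.prems by auto
  next
    case False
    then have ab: "a \<le> b" using Suc.prems by simp
    show ?thesis
    proof (cases "h b \<le> v")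
      case True
      then obtain k where "a \<le> k \<and> k \<le> b \<and> h k = v" using Suc.IH[OF ab] Suc.prems by auto
      then show ?thesis by auto
    next
      case False
      then have "h b \<le> h (Suc b) + 1" using Suc.prems ab by auto
      then have "h (Suc b) = v" using False Suc.prems by simp
      then show ?thesis using Suc.prems by auto
    qed
  qed
qed

lemma pigeonhole_pair:
  fixes f :: "nat \<Rightarrow> 'a::finite"
  assumes "CARD('a) < H"
  obtains l l' where "1 \<le> l" "l < l'" "l' \<le> H" "f l = f l'"
proof -
  have "\<not> inj_on f {1..H}"
  proof
    assume "inj_on f {1..H}"
    then have "card {1..H} \<le> CARD('a)" by (rule card_inj_on_le) auto
    then show False using assms by simp
  qed
  then obtain l1 l2 where l12: "l1 \<in> {1..H}" "l2 \<in> {1..H}" "l1 \<noteq> l2" "f l1 = f l2"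
    unfolding inj_on_def by blast
  show thesis
  proof (cases "l1 < l2")
    case True
    then show thesis using l12 that[of l1 l2] by auto
  next
    case False
    then show thesis using l12 that[of l2 l1] by auto
  qed
qed

locale unit_mountain =
  fixes h :: "nat \<Rightarrow> nat" and \<tau> m :: nat
  assumes peak_le: "\<tau> \<le> m"
    and up: "\<And>k. k < \<tau> \<Longrightarrow> h (Suc k) \<le> h k + 1"
    and down: "\<And>k. \<tau> \<le> k \<Longrightarrow> k < m \<Longrightarrow> h k \<le> h (Suc k) + 1"
begin

definition last_visit :: "nat \<Rightarrow> nat" where
  "last_visit l = (GREATEST k. k \<le> \<tau> \<and> h k = l)"

definition first_visit :: "nat \<Rightarrow> nat" where
  "first_visit l = (LEAST k. \<tau> \<le> k \<and> h k = l)"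

lemma ivt_ascent: "a \<le> b \<Longrightarrow> b \<le> \<tau> \<Longrightarrow> h a \<le> v \<Longrightarrow> v \<le> h b \<Longrightarrow> \<exists>k. a \<le> k \<and> k \<le> b \<and> h k = v"
  by (rule nat_ivt_up) (use up in auto)

lemma ivt_descent: "\<tau> \<le> a \<Longrightarrow> a \<le> b \<Longrightarrow> b \<le> m \<Longrightarrow> h b \<le> v \<Longrightarrow> v \<le> h a \<Longrightarrow> \<exists>k. a \<le> k \<and> k \<le> b \<and> h k = v"
  by (rule nat_ivt_down) (use down in auto)

lemma last_visit_greatest: "k \<le> \<tau> \<Longrightarrow> h k = l \<Longrightarrow> k \<le> last_visit l"
  unfolding last_visit_def by (rule Greatest_le_nat[of _ _ \<tau>]) auto

lemma first_visit_least: "\<tau> \<le> k \<Longrightarrow> h k = l \<Longrightarrow> first_visit l \<le> k"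
  unfolding first_visit_def by (rule Least_le) auto

lemma last_visit:
  assumes "h 0 \<le> l" "l \<le> h \<tau>"
  shows "last_visit l \<le> \<tau>" "h (last_visit l) = l"
proof -
  obtain k where "k \<le> \<tau> \<and> h k = l" using ivt_ascent[of 0 \<tau> l] assms by auto
  then have "last_visit l \<le> \<tau> \<and> h (last_visit l) = l"
    unfolding last_visit_def by (rule GreatestI_nat[of _ k \<tau>]) auto
  then show "last_visit l \<le> \<tau>" "h (last_visit l) = l" by auto
qed

lemma first_visit:
  assumes "h m \<le> l" "l \<le> h \<tau>"
  shows "\<tau> \<le> first_visit l" "first_visit l \<le> m" "h (first_visit l) = l"
proof -
  obtain k where k: "\<tau> \<le> k" "k \<le> m" "h k = l" using ivt_descent[of \<tau> m l] assms peak_le by auto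
  have "\<tau> \<le> first_visit l \<and> h (first_visit l) = l"
    unfolding first_visit_def by (rule LeastI[of _ k]) (use k in auto)
  moreover have "first_visit l \<le> k" using k by (intro first_visit_least)
  ultimately show "\<tau> \<le> first_visit l" "first_visit l \<le> m" "h (first_visit l) = l"
    using k by auto
qed

lemma last_visit_less:
  assumes "h 0 \<le> l" "l < l'" "l' \<le> h \<tau>"
  shows "last_visit l < last_visit l'"
proof -
  note lv = last_visit[of l] assms
  obtain k where k: "last_visit l \<le> k" "k \<le> \<tau>" "h k = l'"
    using ivt_ascent[of "last_visit l" \<tau> l'] lv by auto
  then have "k \<le> last_visit l'" by (intro last_visit_greatest)
  moreover have "k \<noteq> last_visit l" using k lv by auto
  ultimately show ?thesis using k by simp
qed

lemma first_visit_less: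
  assumes "h m \<le> l" "l < l'" "l' \<le> h \<tau>"
  shows "first_visit l' < first_visit l"
proof -
  note fv = first_visit[of l] assms
  obtain k where k: "\<tau> \<le> k" "k \<le> first_visit l" "h k = l'"
    using ivt_descent[of \<tau> "first_visit l" l'] fv by auto
  then have "first_visit l' \<le> k" by (intro first_visit_least)
  moreover have "k \<noteq> first_visit l" using k fv by auto
  ultimately show ?thesis using k by simp
qed

text \<open>Between the last visit of level \<open>l\<close> on the way up and the first one on the
  way down, the walk cannot drop below \<open>l\<close> without crossing \<open>l\<close> once more.\<close>

lemma above_between_visits:
  assumes "h 0 \<le> l" "h m \<le> l" "l \<le> h \<tau>" "last_visit l \<le> k" "k \<le> first_visit l"
  shows "l \<le> h k"
proof (rule ccontr)
  assume low: "\<not> l \<le> h k"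
  show False
  proof (cases "k \<le> \<tau>")
    case True
    obtain k' where k': "k \<le> k'" "k' \<le> \<tau>" "h k' = l"
      using ivt_ascent[of k \<tau> l] True low assms by auto
    then have "k' \<le> last_visit l" by (intro last_visit_greatest)
    then have "k' = k" using k' assms(4) by linarith
    then show False using k' low by simp
  next
    case False
    obtain k' where k': "\<tau> \<le> k'" "k' \<le> k" "h k' = l"
      using ivt_descent[of \<tau> k l] False low assms first_visit(2)[of l] by auto
    then have "first_visit l \<le> k'" by (intro first_visit_least)
    then have "k' = k" using k' assms(5) by linarith
    then show False using k' low by simp
  qed
qed

end

lemma glue_right:
  fixes b k :: nat
  assumes "c b = c' b" "b \<le> k"
  shows "(if k \<le> b then c k else c' k) = c' k"
proof (cases "k = b")
  case False
  with assms(2) show ?thesis by simp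
qed (use assms(1) in simp)

context poc
begin

definition move :: "'q \<times> nat \<Rightarrow> 'q \<times> nat \<Rightarrow> bool" where
  "move y y' \<longleftrightarrow> snd y > 0 \<and> Pp (fst y) (int (snd y') - int (snd y)) (fst y') > 0"

definition walk :: "(nat \<Rightarrow> 'q \<times> nat) \<Rightarrow> nat \<Rightarrow> nat \<Rightarrow> bool" where
  "walk c a b \<longleftrightarrow> (\<forall>k. a \<le> k \<longrightarrow> k < b \<longrightarrow> move (c k) (c (Suc k)))"

definition hitting_path :: "'q \<Rightarrow> nat \<Rightarrow> (nat \<Rightarrow> 'q \<times> nat) \<Rightarrow> bool" where
  "hitting_path q m c \<longleftrightarrow> c m = (q, 0) \<and> walk c 0 m"

lemma move_counter_step: "move y y' \<Longrightarrow> snd y' \<le> snd y + 1 \<and> snd y \<le> snd y' + 1"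
  unfolding move_def using step_if_Pp_pos by fastforce

lemma walk_mono: "walk c a b \<Longrightarrow> a \<le> a' \<Longrightarrow> b' \<le> b \<Longrightarrow> walk c a' b'"
  unfolding walk_def by auto

lemma walk_glue:
  assumes "walk c a b" "walk c' b e" "c b = c' b"
  shows "walk (\<lambda>k. if k \<le> b then c k else c' k) a e"
  unfolding walk_def
proof (intro allI impI)
  fix k assume k: "a \<le> k" "k < e"
  consider "Suc k \<le> b" | "k = b" | "b < k" by linarith
  then show "move (if k \<le> b then c k else c' k) (if Suc k \<le> b then c (Suc k) else c' (Suc k))"
    by cases (use assms k in \<open>simp_all add: walk_def\<close>)
qed

lemma walk_offset: "walk c (a + d) (b + d) \<Longrightarrow> walk (\<lambda>k. c (k + d)) a b"
  unfolding walk_def by auto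

lemma walk_lower:
  assumes "walk c a b" "\<And>k. a \<le> k \<Longrightarrow> k \<le> b \<Longrightarrow> D < snd (c k)"
  shows "walk (\<lambda>k. (fst (c k), snd (c k) - D)) a b"
  unfolding walk_def
proof (intro allI impI)
  fix k assume k: "a \<le> k" "k < b"
  have "int (snd (c (Suc k)) - D) - int (snd (c k) - D) = int (snd (c (Suc k))) - int (snd (c k))"
    using assms(2)[of k] assms(2)[of "Suc k"] k by simp
  then show "move (fst (c k), snd (c k) - D) (fst (c (Suc k)), snd (c (Suc k)) - D)"
    using assms k unfolding walk_def move_def by simp
qed

lemma hitting_path_remove_cycle:
  assumes path: "hitting_path q m c" and ij: "i < j" "j \<le> m" and eq: "c i = c j"
  shows "\<exists>c'. c' 0 = c 0 \<and> hitting_path q (m - (j - i)) c'"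
proof -
  define c2 where "c2 k = c (k + (j - i))" for k
  define c' where "c' k = (if k \<le> i then c k else c2 k)" for k
  have walk_c: "walk c 0 m" using path unfolding hitting_path_def by simp
  have glue: "c i = c2 i" using eq ij unfolding c2_def by simp
  have "walk c 0 i" using walk_mono[OF walk_c] ij by simp
  moreover have "walk c2 i (m - (j - i))"
    unfolding c2_def using walk_mono[OF walk_c, of "i + (j - i)" "m - (j - i) + (j - i)"] ij
    by (intro walk_offset) simp
  ultimately have "walk c' 0 (m - (j - i))" using glue unfolding c'_def by (intro walk_glue)
  moreover have "c' (m - (j - i)) = c2 (m - (j - i))"
    unfolding c'_def using ij by (intro glue_right[of c i c2, OF glue]) simp
  moreover have "c2 (m - (j - i)) = (q, 0)" using path ij unfolding c2_def hitting_path_def by simp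
  moreover have "c' 0 = c 0" unfolding c'_def by simp
  ultimately show ?thesis unfolding hitting_path_def by metis
qed

text \<open>Pumping down: the segments from \<open>a\<close> to \<open>b\<close> and from \<open>e\<close> to \<open>f\<close> are cut out and the
  middle one is lowered by \<open>l' - l\<close>.\<close>

lemma hitting_path_remove_level_pair:
  assumes path: "hitting_path q m c"
    and ord: "a < b" "b \<le> e" "e < f" "f \<le> m"
    and ends: "c a = (r1, l)" "c b = (r1, l')" "c e = (r2, l')" "c f = (r2, l)"
    and ll: "l < l'" "0 < l"
    and above: "\<And>k. b \<le> k \<Longrightarrow> k \<le> e \<Longrightarrow> l' \<le> snd (c k)"
  shows "\<exists>c'. c' 0 = c 0 \<and> hitting_path q (m - (b - a) - (f - e)) c'"
proof -
  define D where "D = l' - l"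
  define d1 where "d1 = b - a"
  define d2 where "d2 = f - e"
  define E where "E = e - d1"
  define m' where "m' = m - d1 - d2"
  define cB where "cB k = (fst (c (k + d1)), snd (c (k + d1)) - D)" for k
  define cC where "cC k = c (k + d1 + d2)" for k
  define c1 where "c1 k = (if k \<le> a then c k else cB k)" for k
  define c' where "c' k = (if k \<le> E then c1 k else cC k)" for k
  have idx: "a + d1 = b" "E + d1 = e" "E + d1 + d2 = f" "m' + d1 + d2 = m" "a \<le> E" "E \<le> m'"
    using ord unfolding d1_def d2_def E_def m'_def by auto
  have walk_c: "walk c 0 m" using path unfolding hitting_path_def by simp
  have glue1: "c a = cB a" using ends idx ll unfolding cB_def D_def by simp
  have glue2: "c1 E = cC E"
    using glue_right[of c a cB E, OF glue1] ends idx ll unfolding c1_def cB_def cC_def D_def by simp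
  have "walk (\<lambda>k. c (k + d1)) a E"
    using walk_mono[OF walk_c, of "a + d1" "E + d1"] idx by (intro walk_offset) simp
  moreover have "D < snd (c (k + d1))" if "a \<le> k" "k \<le> E" for k
    using above[of "k + d1"] that idx ll unfolding D_def by simp
  ultimately have "walk cB a E"
    unfolding cB_def by (rule walk_lower)
  moreover have "walk c 0 a" using walk_mono[OF walk_c, of 0 a] ord by simp
  ultimately have walk1: "walk c1 0 E" using glue1 unfolding c1_def by (intro walk_glue)
  have "walk cC E m'"
    unfolding cC_def using walk_mono[OF walk_c, of "E + (d1 + d2)" "m' + (d1 + d2)"] idx
    by (simp add: walk_offset add.assoc)
  with walk1 glue2 have "walk c' 0 m'" unfolding c'_def by (intro walk_glue)
  moreover have "c' m' = (q, 0)"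
    using glue_right[of c1 E cC m', OF glue2] path idx unfolding c'_def cC_def hitting_path_def by simp
  moreover have "c' 0 = c 0" unfolding c'_def c1_def by simp
  ultimately show ?thesis unfolding hitting_path_def m'_def d1_def d2_def by blast
qed

lemma hitting_path_if_first_hit_pos:
  "hit q m y > 0 \<Longrightarrow> \<exists>c. c 0 = y \<and> hitting_path q m c"
proof (induction m arbitrary: y)
  case 0
  then have "y = (q, 0)" by (simp split: if_splits)
  then show ?case by (intro exI[of _ "\<lambda>_. y"]) (simp add: hitting_path_def walk_def)
next
  case (Suc m)
  obtain r i where y: "y = (r, i)" by fastforce
  have i: "i > 0" using Suc.prems y by (cases i) auto
  have "(\<Sum>r'\<in>UNIV. \<Sum>c\<in>{-1,0,1}. Pp r c r' * hit q m (r', nat (int i + c))) > 0"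
    using Suc.prems y first_hit_Suc_pos[OF i] by simp
  then obtain r' d where d: "d \<in> {-1,0,1}" "Pp r d r' * hit q m (r', nat (int i + d)) > 0"
    by (blast dest: sum_pos_imp_ex_pos)
  then have "Pp r d r' > 0" "hit q m (r', nat (int i + d)) > 0"
    using Pp_nonneg[of r d r'] first_hit_nonneg[of q m] by (auto simp: zero_less_mult_iff)
  moreover obtain c where c: "c 0 = (r', nat (int i + d))" "hitting_path q m c"
    using Suc.IH \<open>hit q m (r', nat (int i + d)) > 0\<close> by blast
  moreover have "int (nat (int i + d)) - int i = d" using i d(1) by auto
  ultimately have "move y (c 0)" using y i unfolding move_def by simp
  moreover have "move (c (k - 1)) (c k)" if "0 < k" "k < Suc m" for k
    using c(2) that unfolding hitting_path_def walk_def by (cases k) auto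
  ultimately have "hitting_path q (Suc m) (\<lambda>k. if k = 0 then y else c (k - 1))"
    using c(2) unfolding hitting_path_def walk_def by auto
  then show ?case by (intro exI[of _ "\<lambda>k. if k = 0 then y else c (k - 1)"]) simp
qed

lemma first_hit_ge_if_hitting_path: "hitting_path q m c \<Longrightarrow> xm ^ m \<le> hit q m (c 0)"
proof (induction m arbitrary: c)
  case 0
  then show ?case by (simp add: hitting_path_def)
next
  case (Suc m)
  have "hitting_path q m (c \<circ> Suc)"
    using Suc.prems unfolding hitting_path_def walk_def by auto
  then have IH: "xm ^ m \<le> hit q m (c 1)" using Suc.IH by fastforce
  obtain r i r' j where c01: "c 0 = (r, i)" "c 1 = (r', j)" by fastforce
  have "move (c 0) (c 1)" using Suc.prems unfolding hitting_path_def walk_def by auto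
  then have i: "i > 0" and pos: "Pp r (int j - int i) r' > 0" using c01 unfolding move_def by auto
  define d where "d = int j - int i"
  have d: "d \<in> {-1,0,1}" "nat (int i + d) = j"
    using step_if_Pp_pos[OF pos] unfolding d_def by simp_all
  have "xm ^ Suc m \<le> Pp r d r' * hit q m (r', j)"
    using IH c01 x_min_le_Pp[OF pos] x_min_pos unfolding d_def
    by (simp add: mult_mono first_hit_nonneg)
  also have "\<dots> \<le> (\<Sum>c\<in>{-1,0,1}. Pp r c r' * hit q m (r', nat (int i + c)))"
    using member_le_sum[of d "{-1,0,1}" "\<lambda>c. Pp r c r' * hit q m (r', nat (int i + c))"] d
    by (simp add: Pp_nonneg first_hit_nonneg)
  also have "\<dots> \<le> (\<Sum>r''\<in>UNIV. \<Sum>c\<in>{-1,0,1}. Pp r c r'' * hit q m (r'', nat (int i + c)))"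
    by (rule member_le_sum) (auto intro!: sum_nonneg mult_nonneg_nonneg simp: Pp_nonneg first_hit_nonneg)
  also have "\<dots> = hit q (Suc m) (c 0)" using first_hit_Suc_pos[OF i] c01 by simp
  finally show ?case .
qed

lemma shortest_hitting_path_inj:
  assumes path: "hitting_path q m c"
    and shortest: "\<And>m' c'. c' 0 = c 0 \<Longrightarrow> hitting_path q m' c' \<Longrightarrow> m \<le> m'"
  shows "inj_on c {..<m}"
proof (rule inj_onI)
  have no_cycle: False if ij: "i < j" "j < m" "c i = c j" for i j
  proof -
    obtain c' where "c' 0 = c 0" "hitting_path q (m - (j - i)) c'"
      using hitting_path_remove_cycle[OF path ij(1) _ ij(3)] ij(2) by auto
    then show False using shortest[of c' "m - (j - i)"] ij by auto
  qed
  fix i j assume "i \<in> {..<m}" "j \<in> {..<m}" "c i = c j"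
  then show "i = j" using no_cycle by (metis lessThan_iff linorder_neqE_nat)
qed

text \<open>Otherwise two levels \<open>l < l'\<close> are entered on the way up and left on the way down in
  the same pair of states, and pumping down shortens the path.\<close>

lemma shortest_hitting_path_height:
  assumes path: "hitting_path q m c" and start: "snd (c 0) = 1"
    and shortest: "\<And>m' c'. c' 0 = c 0 \<Longrightarrow> hitting_path q m' c' \<Longrightarrow> m \<le> m'"
    and "k \<le> m"
  shows "snd (c k) \<le> CARD('q) ^ 2"
proof -
  define h where "h k = snd (c k)" for k
  have "Max (h ` {..m}) \<in> h ` {..m}" by (rule Max_in) auto
  then obtain \<tau> where \<tau>m: "\<tau> \<in> {..m}" and peak: "Max (h ` {..m}) = h \<tau>" by (rule imageE)
  have \<tau>: "\<tau> \<le> m" "\<And>k. k \<le> m \<Longrightarrow> h k \<le> h \<tau>"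
    using \<tau>m unfolding peak[symmetric] by auto
  have "h (Suc k) \<le> h k + 1 \<and> h k \<le> h (Suc k) + 1" if "k < m" for k
    using path that move_counter_step unfolding hitting_path_def walk_def h_def by auto
  then interpret unit_mountain h \<tau> m
    using \<tau>(1) by unfold_locales auto
  have ends: "h 0 = 1" "h m = 0" using start path unfolding h_def hitting_path_def by auto
  have "h \<tau> \<le> CARD('q) ^ 2"
  proof (rule ccontr)
    assume high: "\<not> h \<tau> \<le> CARD('q) ^ 2"
    obtain l l' where ll: "1 \<le> l" "l < l'" "l' \<le> h \<tau>"
      and same_states: "fst (c (last_visit l)) = fst (c (last_visit l'))"
        "fst (c (first_visit l)) = fst (c (first_visit l'))"
    proof -
      have "CARD('q \<times> 'q) < h \<tau>" using high by (simp add: power2_eq_square)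
      then obtain l l' where "1 \<le> l" "l < l'" "l' \<le> h \<tau>"
        "(fst (c (last_visit l)), fst (c (first_visit l))) = (fst (c (last_visit l')), fst (c (first_visit l')))"
        by (rule pigeonhole_pair)
      then show thesis using that by simp
    qed
    have lv: "h (last_visit l) = l" "h (last_visit l') = l'" "last_visit l' \<le> \<tau>"
      using last_visit ll ends by auto
    have fv: "h (first_visit l) = l" "h (first_visit l') = l'" "\<tau> \<le> first_visit l'" "first_visit l \<le> m"
      using first_visit ll ends by auto
    have lv_less: "last_visit l < last_visit l'" using last_visit_less ll ends by simp
    have fv_less: "first_visit l' < first_visit l" using first_visit_less ll ends by simp
    obtain c' where c': "c' 0 = c 0"
      "hitting_path q (m - (last_visit l' - last_visit l) - (first_visit l - first_visit l')) c'"
    proof -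
      have "\<exists>c'. c' 0 = c 0 \<and>
          hitting_path q (m - (last_visit l' - last_visit l) - (first_visit l - first_visit l')) c'"
      proof (rule hitting_path_remove_level_pair[OF path lv_less _ fv_less fv(4)])
        show "last_visit l' \<le> first_visit l'" using lv(3) fv(3) by simp
        show "c (last_visit l) = (fst (c (last_visit l)), l)"
          "c (last_visit l') = (fst (c (last_visit l)), l')"
          "c (first_visit l') = (fst (c (first_visit l)), l')"
          "c (first_visit l) = (fst (c (first_visit l)), l)"
          using lv(1,2) fv(1,2) same_states unfolding prod_eq_iff h_def by simp_all
        show "l < l'" "0 < l" using ll by auto
        show "l' \<le> snd (c k)" if "last_visit l' \<le> k" "k \<le> first_visit l'" for k
          using above_between_visits[OF _ _ ll(3) that] ll ends unfolding h_def by simp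
      qed
      then show thesis using that by blast
    qed
    have "m \<le> m - (last_visit l' - last_visit l) - (first_visit l - first_visit l')"
      using shortest[OF c'] .
    then show False using lv_less fv_less fv(4) by linarith
  qed
  then show ?thesis using \<tau>(2)[OF assms(4)] unfolding h_def by simp
qed

lemma shortest_hitting_path_length:
  assumes path: "hitting_path q m c" and start: "snd (c 0) = 1"
    and shortest: "\<And>m' c'. c' 0 = c 0 \<Longrightarrow> hitting_path q m' c' \<Longrightarrow> m \<le> m'"
  shows "m \<le> CARD('q) ^ 3"
proof -
  have "c ` {..<m} \<subseteq> UNIV \<times> {1..CARD('q) ^ 2}"
  proof
    fix y assume "y \<in> c ` {..<m}"
    then obtain k where k: "k < m" "y = c k" by auto
    then have "0 < snd (c k)" using path unfolding hitting_path_def walk_def move_def by auto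
    moreover have "snd (c k) \<le> CARD('q) ^ 2"
      using shortest_hitting_path_height[OF path start shortest less_imp_le[OF k(1)]] .
    ultimately show "y \<in> UNIV \<times> {1..CARD('q) ^ 2}" using k(2) by (simp add: mem_Times_iff)
  qed
  then have "card (c ` {..<m}) \<le> card (UNIV \<times> {1..CARD('q) ^ 2} :: ('q \<times> nat) set)"
    by (intro card_mono) auto
  moreover have "inj_on c {..<m}" using path shortest by (rule shortest_hitting_path_inj)
  then have "card (c ` {..<m}) = m" by (simp add: card_image)
  ultimately show ?thesis by (simp add: card_cartesian_product power_numeral_reduce)
qed

lemma term_prob_ge_x_min_pow:
  assumes "term_prob Pz Pp p q > 0"
  shows "xm ^ (CARD('q) ^ 3) \<le> term_prob Pz Pp p q"
proof -
  have "\<exists>m. hit q m (p, 1) > 0"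
  proof (rule ccontr)
    assume "\<not> ?thesis"
    then have "\<forall>m. hit q m (p, 1) = 0" using first_hit_nonneg by (meson not_less order_antisym)
    then show False using assms unfolding term_prob_def by simp
  qed
  then have "\<exists>m c. c 0 = (p, 1) \<and> hitting_path q m c" using hitting_path_if_first_hit_pos by blast
  define m0 where "m0 = (LEAST m. \<exists>c. c 0 = (p, 1) \<and> hitting_path q m c)"
  obtain c where c: "c 0 = (p, 1)" "hitting_path q m0 c"
    using LeastI_ex[OF \<open>\<exists>m c. _\<close>] unfolding m0_def by blast
  have "m0 \<le> m'" if "c' 0 = c 0" "hitting_path q m' c'" for m' c'
    unfolding m0_def by (rule Least_le) (use that c(1) in auto)
  then have "m0 \<le> CARD('q) ^ 3"
    using shortest_hitting_path_length[OF c(2)] c(1) by simp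
  then have "xm ^ (CARD('q) ^ 3) \<le> xm ^ m0" by (rule x_min_pow_antimono)
  also have "\<dots> \<le> hit q m0 (p, 1)" using first_hit_ge_if_hitting_path[OF c(2)] c(1) by simp
  also have "\<dots> \<le> term_prob Pz Pp p q" unfolding term_prob_def
    using sum_le_suminf[OF summable_first_hit, of "{m0}"] by (simp add: first_hit_nonneg)
  finally show ?thesis .
qed

end

lemma rtrancl_exit_edge:
  assumes "r \<in> U" "(r, r') \<in> R\<^sup>*" "r' \<notin> U"
  shows "\<exists>a\<in>U. \<exists>a'. (a, a') \<in> R \<and> a' \<notin> U"
proof (rule ccontr)
  assume "\<not> ?thesis"
  then have closed: "\<And>a a'. a \<in> U \<Longrightarrow> (a, a') \<in> R \<Longrightarrow> a' \<in> U" by blast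
  have "r' \<in> U" using assms(2,1) by (induction rule: rtrancl_induct) (auto intro: closed)
  then show False using assms(3) by simp
qed

context poc
begin

definition escapable :: "'q set \<Rightarrow> bool" where
  "escapable S \<longleftrightarrow> (\<forall>r\<in>S. \<exists>r'. (r, r') \<in> (X_edges Pp)\<^sup>* \<and> r' \<notin> S)"

fun stay_prob :: "'q set \<Rightarrow> nat \<Rightarrow> 'q \<Rightarrow> real" where
  "stay_prob S 0 r = 1"
| "stay_prob S (Suc k) r = (\<Sum>r'\<in>S. X_mat Pp r r' * stay_prob S k r')"

lemma stay_prob_bounds: "0 \<le> stay_prob S k r \<and> stay_prob S k r \<le> 1"
proof (induction k arbitrary: r)
  case (Suc k)
  have "0 \<le> stay_prob S (Suc k) r"
    using Suc by (auto intro!: sum_nonneg mult_nonneg_nonneg simp: X_mat_nonneg)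
  moreover have "stay_prob S (Suc k) r \<le> (\<Sum>r'\<in>S. X_mat Pp r r' * 1)"
    using Suc by (auto intro!: sum_mono simp: X_mat_nonneg mult_left_le)
  ultimately show ?case using X_mat_sum_le_1[where A=S and r=r] by simp
qed simp

lemma stay_prob_Suc_le: "stay_prob S (Suc k) r \<le> stay_prob S k r"
proof (induction k arbitrary: r)
  case 0
  then show ?case using stay_prob_bounds[of S "Suc 0" r] by simp
next
  case (Suc k)
  then show ?case by (auto intro!: sum_mono mult_left_mono X_mat_nonneg)
qed

lemma stay_prob_Suc_le_if_edge:
  assumes edge: "(r, r1) \<in> X_edges Pp" and r1: "r1 \<in> S \<Longrightarrow> stay_prob S l r1 \<le> 1 - xm ^ l"
  shows "stay_prob S (Suc l) r \<le> 1 - xm ^ Suc l"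
proof -
  have Xr: "xm \<le> X_mat Pp r r1" using edge x_min_le_X_mat unfolding X_edges_def by auto
  have rest: "(\<Sum>r'\<in>S - {r1}. X_mat Pp r r' * stay_prob S l r') \<le> 1 - X_mat Pp r r1"
  proof -
    have "(\<Sum>r'\<in>S - {r1}. X_mat Pp r r' * stay_prob S l r') \<le> (\<Sum>r'\<in>UNIV - {r1}. X_mat Pp r r')"
      using stay_prob_bounds
      by (intro order_trans[OF sum_mono sum_mono2]) (auto simp: X_mat_nonneg mult_left_le)
    then show ?thesis using X_mat_sum_remove by simp
  qed
  show ?thesis
  proof (cases "r1 \<in> S")
    case True
    have "stay_prob S (Suc l) r =
        X_mat Pp r r1 * stay_prob S l r1 + (\<Sum>r'\<in>S - {r1}. X_mat Pp r r' * stay_prob S l r')"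
      using True by (simp add: sum.remove)
    also have "\<dots> \<le> X_mat Pp r r1 * (1 - xm ^ l) + (1 - X_mat Pp r r1)"
      using r1[OF True] rest by (intro add_mono mult_left_mono) (auto simp: X_mat_nonneg)
    also have "\<dots> \<le> 1 - xm * xm ^ l"
      using Xr x_min_pos by (simp add: algebra_simps mult_right_mono)
    finally show ?thesis by simp
  next
    case False
    then have "stay_prob S (Suc l) r \<le> 1 - X_mat Pp r r1" using rest by simp
    also have "\<dots> \<le> 1 - xm ^ Suc l"
      using Xr x_min_pow_antimono[of 1 "Suc l"] by simp
    finally show ?thesis .
  qed
qed

text \<open>Each round of the induction adds at least one state of \<open>S\<close> on which the bound
  already holds: take the last state of \<open>S\<close> not yet covered on a path leaving \<open>S\<close>.\<close>

lemma stay_prob_card_le: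
  assumes "escapable S" "r \<in> S"
  shows "stay_prob S (card S) r \<le> 1 - xm ^ card S"
proof -
  define D where "D l = {r\<in>S. stay_prob S l r \<le> 1 - xm ^ l}" for l
  have Dsub: "D l \<subseteq> S" for l unfolding D_def by auto
  have Dmono: "D l \<subseteq> D (Suc l)" for l
  proof
    fix r assume "r \<in> D l"
    then show "r \<in> D (Suc l)"
      using stay_prob_Suc_le[of S l r] x_min_pow_antimono[of l "Suc l"] unfolding D_def by auto
  qed
  have "l \<le> card S \<Longrightarrow> l \<le> card (D l)" for l
  proof (induction l)
    case (Suc l)
    show ?case
    proof (cases "D l = S")
      case True
      then have "D (Suc l) = S" using Dmono[of l] Dsub[of "Suc l"] by auto
      then show ?thesis using Suc by simp
    next
      case False
      then obtain r0 where r0: "r0 \<in> S - D l" using Dsub by blast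
      then obtain r' where "(r0, r') \<in> (X_edges Pp)\<^sup>*" "r' \<notin> S - D l"
        using assms(1) unfolding escapable_def by blast
      then obtain r r1 where rr: "r \<in> S - D l" "(r, r1) \<in> X_edges Pp" "r1 \<notin> S - D l"
        using rtrancl_exit_edge[OF r0] by blast
      have "r \<in> D (Suc l)"
        using stay_prob_Suc_le_if_edge[OF rr(2)] rr(1,3) unfolding D_def by blast
      then have "insert r (D l) \<subseteq> D (Suc l)" using Dmono by blast
      then have "card (insert r (D l)) \<le> card (D (Suc l))" by (intro card_mono) auto
      then show ?thesis using Suc rr(1) by (simp add: card_insert_if)
    qed
  qed simp
  then have "D (card S) = S" using Dsub[of "card S"] by (meson card_seteq finite le_refl)
  then show ?thesis using assms(2) unfolding D_def by auto
qed

text \<open>Unfolding the equation \<open>|S|\<close> times leaves at most mass \<open>1 - x\<^sub>m\<^sub>i\<^sub>n\<^sup>|\<^sup>S\<^sup>|\<close> on the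
  unknown part.\<close>

lemma escapable_solution_bound:
  fixes Bb :: real
  assumes S: "escapable S"
    and sol: "\<forall>r\<in>S. h r = b r + (\<Sum>r'\<in>S. X_mat Pp r r' * h r')"
    and bb: "\<forall>r\<in>S. \<bar>b r\<bar> \<le> Bb"
    and r: "r \<in> S"
  shows "\<bar>h r\<bar> \<le> card S * Bb / xm ^ card S"
proof -
  define mx where "mx = Max ((\<lambda>r. \<bar>h r\<bar>) ` S)"
  have mxge: "\<And>r. r \<in> S \<Longrightarrow> \<bar>h r\<bar> \<le> mx" unfolding mx_def by auto
  have "mx \<in> (\<lambda>r. \<bar>h r\<bar>) ` S" unfolding mx_def using r by (intro Max_in) auto
  then obtain rs where rs: "rs \<in> S" "\<bar>h rs\<bar> = mx" by auto
  have Bb: "Bb \<ge> 0" using bb r by (meson abs_ge_zero order_trans)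
  have unfold: "\<forall>r\<in>S. \<bar>h r\<bar> \<le> k * Bb + stay_prob S k r * mx" for k
  proof (induction k)
    case 0 then show ?case using mxge by simp
  next
    case (Suc k)
    show ?case
    proof
      fix r assume r: "r \<in> S"
      have "\<bar>h r\<bar> \<le> \<bar>b r\<bar> + \<bar>\<Sum>r'\<in>S. X_mat Pp r r' * h r'\<bar>"
        using sol r by (metis abs_triangle_ineq)
      also have "\<dots> \<le> \<bar>b r\<bar> + (\<Sum>r'\<in>S. \<bar>X_mat Pp r r' * h r'\<bar>)"
        by simp
      also have "\<dots> \<le> Bb + (\<Sum>r'\<in>S. X_mat Pp r r' * (k * Bb + stay_prob S k r' * mx))"
        using Suc bb r by (intro add_mono sum_mono) (auto simp: abs_mult X_mat_nonneg intro!: mult_left_mono)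
      also have "\<dots> = Bb + (k * Bb) * (\<Sum>r'\<in>S. X_mat Pp r r') + stay_prob S (Suc k) r * mx"
        by (simp add: algebra_simps sum.distrib sum_distrib_left sum_distrib_right)
      also have "\<dots> \<le> Bb + k * Bb + stay_prob S (Suc k) r * mx"
        using X_mat_sum_le_1[where A=S and r=r] Bb by (simp add: mult_left_le)
      finally show "\<bar>h r\<bar> \<le> (Suc k) * Bb + stay_prob S (Suc k) r * mx" by (simp add: algebra_simps)
    qed
  qed
  have "mx \<le> card S * Bb + stay_prob S (card S) rs * mx" using unfold rs by auto
  also have "\<dots> \<le> card S * Bb + (1 - xm ^ card S) * mx"
    using stay_prob_card_le[OF S rs(1)] rs by (simp add: mult_right_mono)
  finally have "mx \<le> card S * Bb + (1 - xm ^ card S) * mx" .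
  then have "mx \<le> card S * Bb / xm ^ card S"
    using x_min_pos by (simp add: field_simps)
  then show ?thesis using mxge[OF r] by linarith
qed

lemma escapable_solution_exists:
  assumes S: "escapable S"
  shows "\<exists>h. \<forall>r\<in>S. h r = b r + (\<Sum>r'\<in>S. X_mat Pp r r' * h r')"
proof -
  define \<Phi> :: "real^'q \<Rightarrow> real^'q" where
    "\<Phi> v = (\<chi> r. if r \<in> S then v $ r - (\<Sum>r'\<in>S. X_mat Pp r r' * v $ r') else v $ r)" for v
  have lin: "linear \<Phi>"
    by (rule linearI) (auto simp: \<Phi>_def vec_eq_iff algebra_simps sum.distrib sum_distrib_left)
  have "v = 0" if "\<Phi> v = 0" for v
  proof -
    have "\<Phi> v $ r = 0" for r using that by simp
    then have zero: "(if r \<in> S then v $ r - (\<Sum>r'\<in>S. X_mat Pp r r' * v $ r') else v $ r) = 0" for r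
      unfolding \<Phi>_def by simp
    have sol: "\<forall>r\<in>S. v $ r = 0 + (\<Sum>r'\<in>S. X_mat Pp r r' * v $ r')"
      using zero by (metis add_0 eq_iff_diff_eq_0)
    have out: "v $ r = 0" if "r \<notin> S" for r using zero[of r] that by simp
    have "\<bar>v $ r\<bar> \<le> real (card S) * 0 / xm ^ card S" if "r \<in> S" for r
      by (rule escapable_solution_bound[OF S sol _ that]) simp
    then show "v = 0" using out by (auto simp: vec_eq_iff)
  qed
  then have "surj \<Phi>"
    using linear_injective_imp_surjective[OF lin] lin by (simp add: linear_injective_0)
  then obtain v where v: "\<Phi> v = (\<chi> r. b r)" by (metis surjD)
  have "v $ r = b r + (\<Sum>r'\<in>S. X_mat Pp r r' * v $ r')" if "r \<in> S" for r
  proof -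
    have "\<Phi> v $ r = b r" using v by simp
    then show ?thesis using that unfolding \<Phi>_def by simp
  qed
  then show ?thesis by blast
qed

end

lemma exp_le_quadratic:
  fixes y :: real
  assumes "\<bar>y\<bar> \<le> 1"
  shows "exp y \<le> 1 + y + y\<^sup>2"
proof (cases "y \<ge> 0")
  case True
  then show ?thesis using exp_bound assms by auto
next
  case False
  define z where "z = - y"
  have z: "0 \<le> z" "z \<le> 1" using False assms unfolding z_def by auto
  have "1 + z + z\<^sup>2 / 2 \<le> exp z" using exp_lower_Taylor_quadratic z by simp
  then have "2 + 2 * z + z\<^sup>2 \<le> 2 * exp z" by simp
  moreover have "0 \<le> 1 - z + z\<^sup>2" using z by (simp add: power2_eq_square mult_left_le_one_le)
  ultimately have "(1 - z + z\<^sup>2) * (2 + 2 * z + z\<^sup>2) \<le> (1 - z + z\<^sup>2) * (2 * exp z)"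
    by (rule mult_left_mono)
  moreover have "(1 - z + z\<^sup>2) * (2 + 2 * z + z\<^sup>2) = 2 + z\<^sup>2 + z ^ 3 + z ^ 4"
    by (simp add: algebra_simps power2_eq_square power3_eq_cube power4_eq_xxxx)
  moreover have "0 \<le> z\<^sup>2 + z ^ 3 + z ^ 4" using z by simp
  ultimately have "2 \<le> (1 - z + z\<^sup>2) * (2 * exp z)" by linarith
  then have "1 \<le> (1 - z + z\<^sup>2) * exp z" by simp
  then have "exp (- z) \<le> 1 - z + z\<^sup>2" by (simp add: exp_minus field_simps)
  then show ?thesis unfolding z_def by simp
qed

lemma sum_nat_mult_power_le:
  fixes \<rho> :: real
  assumes "0 \<le> \<rho>" "\<rho> < 1"
  shows "(\<Sum>m\<le>M. real m * \<rho> ^ m) \<le> \<rho> / (1 - \<rho>)\<^sup>2"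
proof -
  have closed_form: "(\<Sum>m\<le>M. real m * \<rho> ^ m) * (1 - \<rho>)\<^sup>2 =
      \<rho> - (M + 1) * \<rho> ^ (M + 1) + M * \<rho> ^ (M + 2)" for M
    by (induction M) (simp_all add: algebra_simps power2_eq_square)
  have "M * \<rho> ^ (M + 2) \<le> M * \<rho> ^ (M + 1)"
    using assms by (intro mult_left_mono power_decreasing) auto
  moreover have "M * \<rho> ^ (M + 1) \<le> (real M + 1) * \<rho> ^ (M + 1)"
    using assms by (intro mult_right_mono) auto
  ultimately have "(\<Sum>m\<le>M. real m * \<rho> ^ m) * (1 - \<rho>)\<^sup>2 \<le> \<rho>" unfolding closed_form by linarith
  then show ?thesis using assms by (simp add: field_simps)
qed

lemma exp_neg_div_one_minus_exp_neg_sq_le: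
  fixes b :: real
  assumes "b > 0"
  shows "exp (- b) / (1 - exp (- b))\<^sup>2 \<le> (1 + b)\<^sup>2 / b\<^sup>2"
proof -
  have "exp (- b) \<le> 1 / (1 + b)"
    using exp_ge_add_one_self[of b] assms by (simp add: exp_minus field_simps)
  then have l: "b / (1 + b) \<le> 1 - exp (- b)" using assms by (simp add: field_simps)
  have "exp (- b) / (1 - exp (- b))\<^sup>2 \<le> 1 / (1 - exp (- b))\<^sup>2"
    using assms by (intro divide_right_mono) auto
  also have "\<dots> \<le> 1 / (b / (1 + b))\<^sup>2"
    using l assms by (intro divide_left_mono power_mono mult_pos_pos) auto
  also have "\<dots> = (1 + b)\<^sup>2 / b\<^sup>2" using assms by (simp add: field_simps power2_eq_square)
  finally show ?thesis .
qed

locale poc_bscc = poc dz dp Pz Pp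
  for dz dp :: "('q::finite \<times> int \<times> 'q) set" and Pz Pp :: "'q \<Rightarrow> int \<Rightarrow> 'q \<Rightarrow> real" +
  fixes B :: "'q set" and \<alpha> :: "'q \<Rightarrow> real"
  assumes bscc: "is_bscc Pp B" and inv: "is_inv_dist Pp B \<alpha>"
begin

abbreviation t :: real where "t \<equiv> trend Pp B \<alpha>"

definition poisson :: "('q \<Rightarrow> real) \<Rightarrow> bool" where
  "poisson g \<longleftrightarrow> (\<forall>r\<in>B. g r = drift Pp r - t + (\<Sum>r'\<in>UNIV. X_mat Pp r r' * g r'))"

lemma B_closed: "r \<in> B \<Longrightarrow> X_mat Pp r r' > 0 \<Longrightarrow> r' \<in> B"
  using bscc unfolding is_bscc_def X_edges_def by auto

lemma B_closed_Pp: "r \<in> B \<Longrightarrow> Pp r c r' > 0 \<Longrightarrow> r' \<in> B"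
  using B_closed X_edge_if_Pp_pos unfolding X_edges_def by blast

lemma X_mat_eq_0_outside_B: "r \<in> B \<Longrightarrow> r' \<notin> B \<Longrightarrow> X_mat Pp r r' = 0"
  using B_closed[of r r'] X_mat_nonneg[of r r'] by force

lemma B_strongly_connected: "r \<in> B \<Longrightarrow> r' \<in> B \<Longrightarrow> (r, r') \<in> (X_edges Pp)\<^sup>*"
  using bscc unfolding is_bscc_def by blast

lemma B_nonempty: "B \<noteq> {}"
  using bscc unfolding is_bscc_def by blast

lemma alpha_nonneg: "r \<in> B \<Longrightarrow> \<alpha> r \<ge> 0"
  and alpha_sum: "(\<Sum>r\<in>B. \<alpha> r) = 1"
  and alpha_stationary: "r' \<in> B \<Longrightarrow> (\<Sum>r\<in>B. \<alpha> r * X_mat Pp r r') = \<alpha> r'"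
  using inv unfolding is_inv_dist_def by auto

lemma abs_trend_le_1: "\<bar>t\<bar> \<le> 1"
proof -
  have "\<bar>t\<bar> \<le> (\<Sum>r\<in>B. \<bar>\<alpha> r * drift Pp r\<bar>)" unfolding trend_def by (rule sum_abs)
  also have "\<dots> \<le> (\<Sum>r\<in>B. \<alpha> r * 1)"
    by (intro sum_mono) (auto simp: abs_mult alpha_nonneg abs_drift_le_1 intro!: mult_left_le)
  finally show ?thesis using alpha_sum by simp
qed

text \<open>The stationarity of \<open>\<alpha>\<close> makes the \<open>\<alpha>\<close>-average of the Poisson defect vanish for
  every \<open>g\<close>; this is why the trend is the right constant in the Poisson equation.\<close>

lemma stationary_average_poisson_defect:
  "(\<Sum>r\<in>B. \<alpha> r * (drift Pp r - t + (\<Sum>r'\<in>UNIV. X_mat Pp r r' * g r') - g r)) = 0"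
proof -
  have "(\<Sum>r\<in>B. \<alpha> r * (\<Sum>r'\<in>UNIV. X_mat Pp r r' * g r')) =
      (\<Sum>r'\<in>UNIV. \<Sum>r\<in>B. \<alpha> r * X_mat Pp r r' * g r')"
    by (simp add: sum_distrib_left mult.assoc sum.swap[of _ B])
  also have "\<dots> = (\<Sum>r'\<in>B. \<Sum>r\<in>B. \<alpha> r * X_mat Pp r r' * g r')"
    by (rule sum.mono_neutral_right) (auto simp: X_mat_eq_0_outside_B)
  also have "\<dots> = (\<Sum>r\<in>B. \<alpha> r * g r)"
    by (rule sum.cong[OF refl]) (simp add: sum_distrib_right[symmetric] alpha_stationary)
  finally have "(\<Sum>r\<in>B. \<alpha> r * (\<Sum>r'\<in>UNIV. X_mat Pp r r' * g r')) = (\<Sum>r\<in>B. \<alpha> r * g r)" .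
  moreover have "(\<Sum>r\<in>B. \<alpha> r * t) = t" using alpha_sum by (simp add: sum_distrib_right[symmetric])
  ultimately show ?thesis
    unfolding trend_def by (simp add: algebra_simps sum.distrib sum_subtractf)
qed

lemma poisson_solution_exists:
  "\<exists>g. poisson g \<and> (\<forall>r. \<bar>g r\<bar> \<le> 2 * real (CARD('q) - 1) / xm ^ (CARD('q) - 1))"
proof -
  obtain r0 where r0: "r0 \<in> B" "\<alpha> r0 > 0"
    using alpha_sum alpha_nonneg by (metis less_eq_real_def sum.neutral zero_neq_one)
  define S where "S = B - {r0}"
  have S: "escapable S"
    using B_strongly_connected r0 unfolding S_def escapable_def by blast
  obtain h where h: "\<forall>r\<in>S. h r = (drift Pp r - t) + (\<Sum>r'\<in>S. X_mat Pp r r' * h r')"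
    using escapable_solution_exists[OF S, of "\<lambda>r. drift Pp r - t"] by blast
  define g where "g r = (if r \<in> S then h r else 0)" for r
  have gsum: "(\<Sum>r'\<in>UNIV. X_mat Pp r r' * g r') = (\<Sum>r'\<in>S. X_mat Pp r r' * h r')" for r
  proof -
    have "(\<Sum>r'\<in>UNIV. X_mat Pp r r' * g r') = (\<Sum>r'\<in>S. X_mat Pp r r' * g r')"
      by (rule sum.mono_neutral_right) (auto simp: g_def)
    then show ?thesis by (simp add: g_def)
  qed
  define \<delta> where "\<delta> r = drift Pp r - t + (\<Sum>r'\<in>UNIV. X_mat Pp r r' * g r') - g r" for r
  have \<delta>S: "\<delta> r = 0" if "r \<in> S" for r
    using h that unfolding \<delta>_def gsum by (simp add: g_def)
  have "\<alpha> r0 * \<delta> r0 = (\<Sum>r\<in>B. \<alpha> r * \<delta> r)"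
    using r0 \<delta>S unfolding S_def by (simp add: sum.remove)
  then have "\<delta> r0 = 0" using stationary_average_poisson_defect[of g] r0 unfolding \<delta>_def by simp
  then have "poisson g" using \<delta>S unfolding poisson_def \<delta>_def S_def by (metis Diff_iff eq_iff_diff_eq_0 singletonD)
  moreover have "\<bar>g r\<bar> \<le> 2 * real (CARD('q) - 1) / xm ^ (CARD('q) - 1)" for r
  proof (cases "r \<in> S")
    case True
    have card_S: "card S \<le> CARD('q) - 1"
      using r0 card_mono[of UNIV B] unfolding S_def by (simp add: diff_le_mono)
    have "\<bar>drift Pp r' - t\<bar> \<le> 2" for r'
      using abs_drift_le_1[of r'] abs_trend_le_1 by linarith
    then have "\<bar>g r\<bar> \<le> card S * 2 / xm ^ card S"
      using escapable_solution_bound[OF S h _ True] unfolding g_def by (simp add: True)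
    also have "\<dots> \<le> real (CARD('q) - 1) * 2 / xm ^ (CARD('q) - 1)"
      using card_S[folded of_nat_le_iff[where 'a=real]] x_min_pos x_min_pow_antimono[OF card_S]
      by (intro frac_le) auto
    finally show ?thesis by (simp add: mult.commute)
  qed (use x_min_pos in \<open>simp add: g_def\<close>)
  ultimately show ?thesis by blast
qed

text \<open>Hoeffding-type step: by the Poisson equation the increment \<open>c + g r' - g r - t\<close>
  has mean zero under the rules of \<open>r\<close>, and it is bounded by \<open>2 + 2 G\<^sub>0\<close>.\<close>

lemma exp_increment_step_le:
  fixes g :: "'q \<Rightarrow> real" and G0 \<mu> :: real
  assumes g: "poisson g" "\<forall>r. \<bar>g r\<bar> \<le> G0"
    and mu: "\<bar>\<mu>\<bar> * (2 + 2 * G0) \<le> 1"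
    and r: "r \<in> B"
  shows "(\<Sum>r'\<in>UNIV. \<Sum>c\<in>{-1,0,1}. Pp r c r' * exp (\<mu> * (of_int c + g r' - g r)))
          \<le> exp (\<mu> * t + \<mu>\<^sup>2 * (2 + 2 * G0)\<^sup>2)"
proof -
  define cc where "cc = 2 + 2 * G0"
  define D where "D c r' = of_int c + g r' - g r - t" for c :: int and r'
  have term_le: "Pp r c r' * exp (\<mu> * (of_int c + g r' - g r)) \<le>
      Pp r c r' * (exp (\<mu> * t) * (1 + \<mu> * D c r' + \<mu>\<^sup>2 * cc\<^sup>2))" if "c \<in> {-1,0,1}" for c r'
  proof -
    have "\<bar>D c r'\<bar> \<le> cc"
      using that g(2)[rule_format, of r'] g(2)[rule_format, of r] abs_trend_le_1
      unfolding D_def cc_def by (auto simp: abs_le_iff)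
    then have small: "\<bar>\<mu> * D c r'\<bar> \<le> \<bar>\<mu>\<bar> * cc" by (simp add: abs_mult mult_left_mono)
    then have "(\<mu> * D c r')\<^sup>2 \<le> \<mu>\<^sup>2 * cc\<^sup>2"
      by (metis abs_ge_zero power2_abs power_mono power_mult_distrib)
    moreover have "\<bar>\<mu> * D c r'\<bar> \<le> 1" using small mu unfolding cc_def by linarith
    ultimately have "exp (\<mu> * D c r') \<le> 1 + \<mu> * D c r' + \<mu>\<^sup>2 * cc\<^sup>2"
      using exp_le_quadratic by fastforce
    moreover have "exp (\<mu> * (of_int c + g r' - g r)) = exp (\<mu> * t) * exp (\<mu> * D c r')"
      unfolding D_def by (simp add: exp_add[symmetric] algebra_simps)
    ultimately show ?thesis by (simp add: Pp_nonneg mult_left_mono)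
  qed
  have mean_zero: "(\<Sum>r'\<in>UNIV. \<Sum>c\<in>{-1,0,1}. Pp r c r' * D c r') = 0"
  proof -
    have "(\<Sum>r'\<in>UNIV. \<Sum>c\<in>{-1,0,1}. Pp r c r' * D c r') =
       (\<Sum>r'\<in>UNIV. \<Sum>c\<in>{-1,0,1}. Pp r c r' * of_int c) + (\<Sum>r'\<in>UNIV. X_mat Pp r r' * g r')
        - (g r + t) * (\<Sum>r'\<in>UNIV. \<Sum>c\<in>{-1,0,1}. Pp r c r')"
      unfolding D_def X_mat_def
      by (simp add: algebra_simps sum.distrib sum_subtractf sum_distrib_left sum_distrib_right)
    then show ?thesis using g(1) r Pp_row_sum drift_eq_sum unfolding poisson_def by simp
  qed
  have "(\<Sum>r'\<in>UNIV. \<Sum>c\<in>{-1,0,1}. Pp r c r' * exp (\<mu> * (of_int c + g r' - g r))) \<le>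
      (\<Sum>r'\<in>UNIV. \<Sum>c\<in>{-1,0,1}. Pp r c r' * (exp (\<mu> * t) * (1 + \<mu> * D c r' + \<mu>\<^sup>2 * cc\<^sup>2)))"
    by (intro sum_mono term_le) auto
  also have "\<dots> = exp (\<mu> * t) * ((1 + \<mu>\<^sup>2 * cc\<^sup>2) * (\<Sum>r'\<in>UNIV. \<Sum>c\<in>{-1,0,1}. Pp r c r')
        + \<mu> * (\<Sum>r'\<in>UNIV. \<Sum>c\<in>{-1,0,1}. Pp r c r' * D c r'))"
    by (simp add: algebra_simps sum.distrib sum_distrib_left sum_distrib_right)
  also have "\<dots> = exp (\<mu> * t) * (1 + \<mu>\<^sup>2 * cc\<^sup>2)" using mean_zero Pp_row_sum by simp
  also have "\<dots> \<le> exp (\<mu> * t) * exp (\<mu>\<^sup>2 * cc\<^sup>2)"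
    by (intro mult_left_mono) (auto simp: add.commute)
  finally show ?thesis unfolding cc_def by (simp add: exp_add)
qed

text \<open>Chernoff bound: \<open>exp (\<mu> (counter + g state) - \<lambda> n)\<close> is a supermartingale by the
  previous lemma, and at \<open>q(0)\<close> it equals \<open>exp (\<mu> g q - \<lambda> n)\<close>.\<close>

lemma first_hit_le_exp:
  fixes g :: "'q \<Rightarrow> real" and G0 \<mu> :: real
  assumes g: "poisson g" "\<forall>r. \<bar>g r\<bar> \<le> G0"
    and mu: "\<bar>\<mu>\<bar> * (2 + 2 * G0) \<le> 1"
    and qB: "q \<in> B"
  shows "r \<in> B \<Longrightarrow> hit q m (r, i) \<le>
     exp (\<mu> * (real i + g r - g q) + real m * (\<mu> * t + \<mu>\<^sup>2 * (2 + 2 * G0)\<^sup>2))"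
proof (induction m arbitrary: r i)
  case 0
  then show ?case by auto
next
  case (Suc m)
  define rate where "rate = \<mu> * t + \<mu>\<^sup>2 * (2 + 2 * G0)\<^sup>2"
  define A where "A = exp (\<mu> * (real i + g r - g q) + real m * rate)"
  show ?case
  proof (cases "i = 0")
    case False
    then have i: "i > 0" by simp
    have step: "Pp r c r' * hit q m (r', nat (int i + c)) \<le>
        A * (Pp r c r' * exp (\<mu> * (of_int c + g r' - g r)))" if c: "c \<in> {-1,0,1}" for c r'
    proof (cases "Pp r c r' > 0")
      case True
      then have "r' \<in> B" using B_closed_Pp Suc.prems by blast
      moreover have "real (nat (int i + c)) = real i + of_int c" using i c by auto
      ultimately have "hit q m (r', nat (int i + c)) \<le> A * exp (\<mu> * (of_int c + g r' - g r))"
        using Suc.IH[of r' "nat (int i + c)"] unfolding A_def rate_def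
        by (simp add: exp_add[symmetric] algebra_simps)
      then have "Pp r c r' * hit q m (r', nat (int i + c)) \<le> Pp r c r' * (A * exp (\<mu> * (of_int c + g r' - g r)))"
        by (rule mult_left_mono) (rule Pp_nonneg)
      then show ?thesis by (simp add: mult.left_commute)
    qed (use Pp_nonneg[of r c r'] in simp)
    have "hit q (Suc m) (r, i) \<le>
        A * (\<Sum>r'\<in>UNIV. \<Sum>c\<in>{-1,0,1}. Pp r c r' * exp (\<mu> * (of_int c + g r' - g r)))"
      unfolding first_hit_Suc_pos[OF i] sum_distrib_left by (intro sum_mono step) auto
    also have "\<dots> \<le> A * exp rate"
      using exp_increment_step_le[OF g mu Suc.prems] unfolding rate_def A_def by (intro mult_left_mono) auto
    finally show ?thesis unfolding A_def rate_def by (simp add: exp_add[symmetric] algebra_simps)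
  qed simp
qed

definition decay :: "real \<Rightarrow> real" where
  "decay G0 = 9 * t\<^sup>2 / (64 * (2 + 2 * G0)\<^sup>2)"

text \<open>Taking \<open>\<mu> = -3 t / (8 (2 + 2 G\<^sub>0)\<^sup>2)\<close> in the Chernoff bound: once \<open>m |t| \<ge> 4 i\<close>
  the initial counter is negligible and the bound decays geometrically.\<close>

lemma first_hit_le_geometric:
  fixes g :: "'q \<Rightarrow> real" and G0 :: real
  assumes g: "poisson g" "\<forall>r. \<bar>g r\<bar> \<le> G0"
    and qB: "q \<in> B" and r: "r \<in> B"
    and late: "4 * real i \<le> real m * \<bar>t\<bar>"
  shows "hit q m (r, i) \<le> 2 * exp (- decay G0) ^ m"
proof -
  define cc where "cc = 2 + 2 * G0"
  have "0 \<le> G0" using g(2) abs_ge_zero order_trans by blast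
  then have cc2: "cc \<ge> 2" unfolding cc_def by simp
  define T where "T = \<bar>t\<bar>"
  have T: "0 \<le> T" "T \<le> 1" "T\<^sup>2 = t\<^sup>2" using abs_trend_le_1 unfolding T_def by auto
  define \<mu> where "\<mu> = - (3/8) * t / cc\<^sup>2"
  have abs_mu: "\<bar>\<mu>\<bar> = (3/8) * T / cc\<^sup>2" unfolding \<mu>_def T_def by (simp add: abs_mult)
  have mu_cc: "\<bar>\<mu>\<bar> * cc \<le> 3/16"
  proof -
    have "\<bar>\<mu>\<bar> * cc = (3/8) * T / cc" unfolding abs_mu using cc2 by (simp add: power2_eq_square)
    also have "\<dots> \<le> (3/8) * 1 / 2" using T cc2 by (intro frac_le) auto
    finally show ?thesis by simp
  qed
  have start: "\<mu> * (real i + g r - g q) \<le> \<bar>\<mu>\<bar> * real i + \<bar>\<mu>\<bar> * cc"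
  proof -
    have "\<mu> * (real i + g r - g q) \<le> \<bar>\<mu>\<bar> * \<bar>real i + g r - g q\<bar>" by (simp add: abs_mult[symmetric])
    also have "\<dots> \<le> \<bar>\<mu>\<bar> * (real i + cc)"
      using g(2)[rule_format, of r] g(2)[rule_format, of q] unfolding cc_def
      by (intro mult_left_mono) auto
    finally show ?thesis by (simp add: algebra_simps)
  qed
  have counter: "\<bar>\<mu>\<bar> * real i \<le> (3/32) * real m * t\<^sup>2 / cc\<^sup>2"
  proof -
    have "\<bar>\<mu>\<bar> * real i = (3/32) * T * (4 * real i) / cc\<^sup>2" unfolding abs_mu by simp
    also have "\<dots> \<le> (3/32) * T * (real m * T) / cc\<^sup>2"
      using late T cc2 unfolding T_def by (intro divide_right_mono mult_left_mono) auto
    also have "\<dots> = (3/32) * real m * T\<^sup>2 / cc\<^sup>2" by (simp add: power2_eq_square)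
    finally show ?thesis unfolding T(3) .
  qed
  have rate: "\<mu> * t + \<mu>\<^sup>2 * cc\<^sup>2 = -(15/64) * t\<^sup>2 / cc\<^sup>2"
    unfolding \<mu>_def using cc2 by (simp add: power2_eq_square field_simps)
  have "hit q m (r, i) \<le> exp (\<mu> * (real i + g r - g q) + real m * (\<mu> * t + \<mu>\<^sup>2 * cc\<^sup>2))"
    using first_hit_le_exp[OF g _ qB r] mu_cc unfolding cc_def by simp
  also have "\<dots> \<le> exp (\<bar>\<mu>\<bar> * real i + \<bar>\<mu>\<bar> * cc + real m * (-(15/64) * t\<^sup>2 / cc\<^sup>2))"
    using start unfolding rate by simp
  also have "\<dots> \<le> exp (3/16 + real m * ((3/32) * t\<^sup>2 / cc\<^sup>2 - (15/64) * t\<^sup>2 / cc\<^sup>2))"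
    using counter mu_cc by (simp add: algebra_simps)
  also have "\<dots> = exp (3/16) * exp (- decay G0) ^ m"
    unfolding decay_def cc_def exp_add exp_of_nat_mult[symmetric] by (simp add: field_simps)
  also have "\<dots> \<le> 2 * exp (- decay G0) ^ m"
  proof (intro mult_right_mono)
    show "exp (3/16 :: real) \<le> 2"
      using exp_bound[of "3/16 :: real"] by (simp add: power2_eq_square)
  qed simp
  finally show ?thesis .
qed

lemma partial_time_le_in_bscc:
  fixes g :: "'q \<Rightarrow> real" and G0 :: real
  assumes g: "poisson g" "\<forall>r. \<bar>g r\<bar> \<le> G0"
    and qB: "q \<in> B" and t0: "t \<noteq> 0" and r: "r \<in> B"
  shows "(\<Sum>m\<le>M. real m * hit q m (r, i)) \<le> 4 * real i / \<bar>t\<bar> + 2 * (1 + decay G0)\<^sup>2 / (decay G0)\<^sup>2"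
proof -
  have "0 \<le> G0" using g(2) abs_ge_zero order_trans by blast
  then have b: "decay G0 > 0" unfolding decay_def using t0 by simp
  define \<rho> where "\<rho> = exp (- decay G0)"
  have \<rho>: "0 \<le> \<rho>" "\<rho> < 1" unfolding \<rho>_def using b by auto
  have term_le: "real m * hit q m (r, i) \<le> (4 * real i / \<bar>t\<bar>) * hit q m (r, i) + 2 * (real m * \<rho> ^ m)" for m
  proof (cases "4 * real i \<le> real m * \<bar>t\<bar>")
    case True
    then have "real m * hit q m (r, i) \<le> real m * (2 * \<rho> ^ m)"
      using first_hit_le_geometric[OF g qB r] unfolding \<rho>_def by (simp add: mult_left_mono)
    moreover have "0 \<le> (4 * real i / \<bar>t\<bar>) * hit q m (r, i)"
      by (intro mult_nonneg_nonneg divide_nonneg_nonneg) (auto simp: first_hit_nonneg)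
    ultimately show ?thesis by linarith
  next
    case False
    then have "real m \<le> 4 * real i / \<bar>t\<bar>" using t0 by (simp add: field_simps)
    then have "real m * hit q m (r, i) \<le> (4 * real i / \<bar>t\<bar>) * hit q m (r, i)"
      by (intro mult_right_mono) (auto simp: first_hit_nonneg)
    moreover have "0 \<le> 2 * (real m * \<rho> ^ m)" using \<rho> by simp
    ultimately show ?thesis by linarith
  qed
  have "(\<Sum>m\<le>M. real m * hit q m (r, i)) \<le>
      (\<Sum>m\<le>M. (4 * real i / \<bar>t\<bar>) * hit q m (r, i) + 2 * (real m * \<rho> ^ m))"
    by (intro sum_mono term_le)
  also have "\<dots> = (4 * real i / \<bar>t\<bar>) * (\<Sum>m\<le>M. hit q m (r, i)) + 2 * (\<Sum>m\<le>M. real m * \<rho> ^ m)"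
    by (simp add: sum.distrib sum_distrib_left)
  also have "\<dots> \<le> (4 * real i / \<bar>t\<bar>) * 1 + 2 * (\<rho> / (1 - \<rho>)\<^sup>2)"
    using first_hit_partial_sum_le_1 sum_nat_mult_power_le[OF \<rho>] by (intro add_mono mult_left_mono) auto
  also have "\<rho> / (1 - \<rho>)\<^sup>2 \<le> (1 + decay G0)\<^sup>2 / (decay G0)\<^sup>2"
    unfolding \<rho>_def by (rule exp_neg_div_one_minus_exp_neg_sq_le[OF b])
  finally show ?thesis by simp
qed

end

lemma sum_mult_indicator:
  fixes f g :: "'a::finite \<Rightarrow> real"
  shows "(\<Sum>x\<in>UNIV. f x * (if x \<in> A then g x else 0)) = (\<Sum>x\<in>A. f x * g x)"
proof -
  have "(\<Sum>x\<in>UNIV. f x * (if x \<in> A then g x else 0)) = (\<Sum>x\<in>A. f x * (if x \<in> A then g x else 0))"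
    by (rule sum.mono_neutral_right) auto
  then show ?thesis by simp
qed

context poc
begin

lemma expected_affine_step:
  "(\<Sum>r'\<in>UNIV. \<Sum>c\<in>{-1,0,1}. Pp r c r' * (\<phi> r' + \<beta> * (real i + of_int c) + 1)) =
    (\<Sum>r'\<in>UNIV. X_mat Pp r r' * \<phi> r') + \<beta> * real i + \<beta> * drift Pp r + 1"
proof -
  have "(\<Sum>c\<in>{-1,0,1}. Pp r c r' * (\<phi> r' + \<beta> * (real i + of_int c) + 1)) =
      X_mat Pp r r' * \<phi> r' + (\<beta> * real i + 1) * (\<Sum>c\<in>{-1,0,1}. Pp r c r')
      + \<beta> * (\<Sum>c\<in>{-1,0,1}. Pp r c r' * of_int c)" for r'
    unfolding X_mat_def by (simp add: algebra_simps)
  then have "(\<Sum>r'\<in>UNIV. \<Sum>c\<in>{-1,0,1}. Pp r c r' * (\<phi> r' + \<beta> * (real i + of_int c) + 1)) =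
      (\<Sum>r'\<in>UNIV. X_mat Pp r r' * \<phi> r') + (\<beta> * real i + 1) * (\<Sum>r'\<in>UNIV. \<Sum>c\<in>{-1,0,1}. Pp r c r')
      + \<beta> * (\<Sum>r'\<in>UNIV. \<Sum>c\<in>{-1,0,1}. Pp r c r' * of_int c)"
    by (simp only: sum.distrib sum_distrib_left[symmetric])
  then show ?thesis by (simp only: Pp_row_sum drift_eq_sum[symmetric]) simp
qed

lemma partial_time_Suc_le:
  assumes i: "i > 0"
    and succ: "\<And>r' c. c \<in> {-1,0,1} \<Longrightarrow>
      (\<Sum>m\<le>M. real m * hit q m (r', nat (int i + c))) \<le> \<phi> r' + \<beta> * (real i + of_int c)"
  shows "(\<Sum>m\<le>Suc M. real m * hit q m (r, i)) \<le>
    (\<Sum>r'\<in>UNIV. X_mat Pp r r' * \<phi> r') + \<beta> * real i + \<beta> * drift Pp r + 1"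
proof -
  have "(\<Sum>m\<le>Suc M. real m * hit q m (r, i)) \<le>
      (\<Sum>r'\<in>UNIV. \<Sum>c\<in>{-1,0,1}. Pp r c r' * (\<phi> r' + \<beta> * (real i + of_int c) + 1))"
    unfolding weighted_partial_sum_Suc[OF i]
    by (intro sum_mono mult_left_mono Pp_nonneg add_mono succ first_hit_partial_sum_le_1) auto
  then show ?thesis unfolding expected_affine_step .
qed

lemma correction_solution_exists:
  fixes \<beta> C :: real
  assumes Tr: "escapable Tr" and card: "card Tr \<le> L" and nonneg: "0 \<le> \<beta>" "0 \<le> C"
  obtains a where
    "\<forall>r\<in>Tr. a r = 1 + \<beta> * drift Pp r + C * (\<Sum>r'\<in>B. X_mat Pp r r') + (\<Sum>r'\<in>Tr. X_mat Pp r r' * a r')"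
    "\<forall>r\<in>Tr. \<bar>a r\<bar> \<le> real L * (1 + \<beta> + C) / xm ^ L"
proof -
  obtain a where a: "\<forall>r\<in>Tr. a r = (1 + \<beta> * drift Pp r + C * (\<Sum>r'\<in>B. X_mat Pp r r')) + (\<Sum>r'\<in>Tr. X_mat Pp r r' * a r')"
    using escapable_solution_exists[OF Tr, of "\<lambda>r. 1 + \<beta> * drift Pp r + C * (\<Sum>r'\<in>B. X_mat Pp r r')"]
    by blast
  have rhs: "\<forall>r\<in>Tr. \<bar>1 + \<beta> * drift Pp r + C * (\<Sum>r'\<in>B. X_mat Pp r r')\<bar> \<le> 1 + \<beta> + C"
  proof
    fix r
    have "\<bar>\<beta> * drift Pp r\<bar> \<le> \<beta>" using abs_drift_le_1[of r] nonneg by (simp add: abs_mult mult_left_le)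
    moreover have "\<bar>C * (\<Sum>r'\<in>B. X_mat Pp r r')\<bar> \<le> C"
      using X_mat_sum_le_1[where A=B and r=r] nonneg sum_nonneg[of B "X_mat Pp r"] X_mat_nonneg
      by (simp add: abs_mult mult_left_le)
    ultimately show "\<bar>1 + \<beta> * drift Pp r + C * (\<Sum>r'\<in>B. X_mat Pp r r')\<bar> \<le> 1 + \<beta> + C" by linarith
  qed
  have "\<bar>a r\<bar> \<le> real L * (1 + \<beta> + C) / xm ^ L" if "r \<in> Tr" for r
  proof -
    have "\<bar>a r\<bar> \<le> card Tr * (1 + \<beta> + C) / xm ^ card Tr"
      using that by (rule escapable_solution_bound[OF Tr a rhs])
    also have "\<dots> \<le> real L * (1 + \<beta> + C) / xm ^ L"
      using card x_min_pos x_min_pow_antimono[OF card] nonneg by (intro frac_le mult_right_mono) auto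
    finally show ?thesis .
  qed
  then show thesis by (intro that[OF a]) blast
qed

text \<open>The correction \<open>a\<close> absorbs the one-step error on \<open>Tr\<close>, so the linear bound valid on
  \<open>B\<close> propagates to the states outside \<open>B\<close> that can still reach \<open>q\<close>.\<close>

lemma partial_time_le_outside:
  fixes a :: "'q \<Rightarrow> real" and A0 \<beta> C :: real
  assumes inside: "\<And>r i M. r \<in> B \<Longrightarrow> (\<Sum>m\<le>M. real m * hit q m (r, i)) \<le> \<beta> * real i + C"
    and qB: "q \<in> B" and disj: "Tr \<inter> B = {}"
    and unreachable: "\<And>r. r \<notin> Tr \<Longrightarrow> r \<notin> B \<Longrightarrow> (r, q) \<notin> (X_edges Pp)\<^sup>*"
    and nonneg: "0 \<le> \<beta>" "0 \<le> C"
    and sol: "\<forall>r\<in>Tr. a r = 1 + \<beta> * drift Pp r + C * (\<Sum>r'\<in>B. X_mat Pp r r') + (\<Sum>r'\<in>Tr. X_mat Pp r r' * a r')"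
    and bound: "\<forall>r\<in>Tr. \<bar>a r\<bar> \<le> A0"
  shows "r \<in> Tr \<Longrightarrow> (\<Sum>m\<le>M. real m * hit q m (r, i)) \<le> a r + A0 + \<beta> * real i"
proof (induction M arbitrary: r i)
  case 0
  then show ?case using bound nonneg by force
next
  case (Suc M)
  show ?case
  proof (cases "i = 0")
    case True
    have "r \<noteq> q" using Suc.prems qB disj by auto
    then have "hit q m (r, i) = 0" for m using True by (cases m) auto
    then show ?thesis using bound Suc.prems nonneg by force
  next
    case False
    then have i: "i > 0" by simp
    define \<phi> where "\<phi> r' = (if r' \<in> Tr then a r' + A0 else 0) + (if r' \<in> B then C else 0)" for r'
    have "(\<Sum>m\<le>M. real m * hit q m (r', nat (int i + c))) \<le> \<phi> r' + \<beta> * (real i + of_int c)"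
      if c: "c \<in> {-1,0,1}" for r' c
    proof (cases "r' \<in> Tr \<or> r' \<in> B")
      case True
      have "real (nat (int i + c)) = real i + of_int c" using i c by auto
      then show ?thesis
        using True Suc.IH[of r' "nat (int i + c)"] inside[of r' "nat (int i + c)" M] disj
        unfolding \<phi>_def by auto
    next
      case False
      then have "hit q m (r', nat (int i + c)) = 0" for m
        using unreachable first_hit_eq_0_if_unreachable by blast
      then show ?thesis using False nonneg i c unfolding \<phi>_def by auto
    qed
    then have "(\<Sum>m\<le>Suc M. real m * hit q m (r, i)) \<le>
        (\<Sum>r'\<in>UNIV. X_mat Pp r r' * \<phi> r') + \<beta> * real i + \<beta> * drift Pp r + 1"
      by (rule partial_time_Suc_le[OF i])
    also have "\<dots> = (\<Sum>r'\<in>Tr. X_mat Pp r r' * a r') + A0 * (\<Sum>r'\<in>Tr. X_mat Pp r r')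
        + C * (\<Sum>r'\<in>B. X_mat Pp r r') + \<beta> * real i + \<beta> * drift Pp r + 1"
      unfolding \<phi>_def
      by (simp add: distrib_left sum.distrib sum_mult_indicator sum_distrib_left[symmetric] algebra_simps)
    also have "\<dots> \<le> a r + A0 + \<beta> * real i"
    proof -
      have "0 \<le> A0" using bound Suc.prems abs_ge_zero order_trans by blast
      then have "A0 * (\<Sum>r'\<in>Tr. X_mat Pp r r') \<le> A0" by (intro mult_left_le X_mat_sum_le_1)
      then show ?thesis using sol Suc.prems by simp
    qed
    finally show ?thesis .
  qed
qed

end

context poc_bscc
begin

lemma partial_time_le:
  fixes g :: "'q \<Rightarrow> real" and G0 C :: real
  assumes g: "poisson g" "\<forall>r. \<bar>g r\<bar> \<le> G0"
    and qB: "q \<in> B" and t0: "t \<noteq> 0"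
    and C: "C = 2 * (1 + decay G0)\<^sup>2 / (decay G0)\<^sup>2"
    and reach: "(p, q) \<in> (X_edges Pp)\<^sup>*"
  shows "(\<Sum>m\<le>M. real m * hit q m (p, 1)) \<le>
     (2 * real (CARD('q) - 1) + 1) * (1 + 4 / \<bar>t\<bar> + C) / xm ^ (CARD('q) - 1)"
proof -
  define \<beta> where "\<beta> = 4 / \<bar>t\<bar>"
  have nonneg: "0 \<le> \<beta>" "0 \<le> C" unfolding \<beta>_def C by simp_all
  have inside: "(\<Sum>m\<le>M. real m * hit q m (r, i)) \<le> \<beta> * real i + C" if "r \<in> B" for r i M
    using partial_time_le_in_bscc[OF g qB t0 that] unfolding C \<beta>_def by simp
  define Tr where "Tr = {r. (r, q) \<in> (X_edges Pp)\<^sup>*} - B"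
  have Tr: "escapable Tr" using qB unfolding Tr_def escapable_def by blast
  have disj: "Tr \<inter> B = {}" and unreachable: "\<And>r. r \<notin> Tr \<Longrightarrow> r \<notin> B \<Longrightarrow> (r, q) \<notin> (X_edges Pp)\<^sup>*"
    unfolding Tr_def by blast+
  define L where "L = CARD('q) - 1"
  have card_Tr: "card Tr \<le> L"
  proof -
    obtain q0 where "q0 \<in> B" using B_nonempty by blast
    then have "Tr \<subseteq> UNIV - {q0}" unfolding Tr_def by auto
    then have "card Tr \<le> card (UNIV - {q0})" by (intro card_mono) auto
    then show ?thesis unfolding L_def by simp
  qed
  define A0 where "A0 = real L * (1 + \<beta> + C) / xm ^ L"
  have A0: "0 \<le> A0" "1 + \<beta> + C \<le> (1 + \<beta> + C) / xm ^ L"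
    unfolding A0_def using nonneg x_min_pos x_min_pow_antimono[of 0 L]
    by (auto simp: le_divide_eq mult_le_cancel_left1)
  obtain a where a: "\<forall>r\<in>Tr. a r = 1 + \<beta> * drift Pp r + C * (\<Sum>r'\<in>B. X_mat Pp r r') + (\<Sum>r'\<in>Tr. X_mat Pp r r' * a r')"
    and bound: "\<forall>r\<in>Tr. \<bar>a r\<bar> \<le> A0"
    using correction_solution_exists[OF Tr card_Tr nonneg] unfolding A0_def by blast
  have "(\<Sum>m\<le>M. real m * hit q m (p, 1)) \<le> 2 * A0 + \<beta> + C"
  proof (cases "p \<in> B")
    case True
    then show ?thesis using inside[of p 1 M] A0(1) by simp
  next
    case False
    then have "p \<in> Tr" using reach unfolding Tr_def by blast
    then have "(\<Sum>m\<le>M. real m * hit q m (p, 1)) \<le> a p + A0 + \<beta> * real 1"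
      using partial_time_le_outside[OF inside qB disj unreachable nonneg a bound] by blast
    moreover have "a p \<le> A0" using bound \<open>p \<in> Tr\<close> by force
    ultimately show ?thesis using nonneg by simp
  qed
  also have "\<dots> \<le> 2 * A0 + (1 + \<beta> + C) / xm ^ L" using A0(2) by linarith
  also have "\<dots> = (2 * real L + 1) * (1 + \<beta> + C) / xm ^ L"
    unfolding A0_def by (simp add: add_divide_distrib[symmetric] algebra_simps)
  finally show ?thesis unfolding \<beta>_def L_def .
qed

end

lemma summable_suminf_le_if_partial_sums_le:
  fixes f :: "nat \<Rightarrow> real"
  assumes "\<And>m. 0 \<le> f m" and "\<And>M. (\<Sum>m\<le>M. f m) \<le> S"
  shows "summable f" "suminf f \<le> S"
proof -
  have partial: "(\<Sum>m<k. f m) \<le> S" for k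
    using assms(2)[of "k - 1"] assms(2)[of 0] assms(1)[of 0] by (cases k) (auto simp: lessThan_Suc_atMost)
  show "summable f" by (rule summableI_nonneg_bounded[OF assms(1) partial])
  then show "suminf f \<le> S" by (rule suminf_le_const[OF _ partial])
qed

lemma decay_constant_le:
  fixes T cc :: real
  assumes T: "0 < T" "T \<le> 1" and cc: "2 \<le> cc"
  shows "2 * (1 + 9 * T\<^sup>2 / (64 * cc\<^sup>2))\<^sup>2 / (9 * T\<^sup>2 / (64 * cc\<^sup>2))\<^sup>2 \<le> 16384 * cc ^ 4 / (81 * T ^ 4)"
proof -
  define b where "b = 9 * T\<^sup>2 / (64 * cc\<^sup>2)"
  have b0: "0 < b" unfolding b_def using T cc by simp
  have "T\<^sup>2 \<le> 1" using T by (simp add: power_le_one)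
  moreover have "2\<^sup>2 \<le> cc\<^sup>2" using cc by (intro power_mono) auto
  ultimately have "b \<le> 9 * 1 / (64 * 2\<^sup>2)" unfolding b_def by (intro frac_le) auto
  then have "(1 + b)\<^sup>2 \<le> (1 + 9/256)\<^sup>2" using b0 by (intro power_mono) auto
  then have "2 * (1 + b)\<^sup>2 / b\<^sup>2 \<le> 2 * 2 / b\<^sup>2" using b0 by (intro divide_right_mono) (auto simp: power2_eq_square)
  also have "\<dots> = 16384 * cc ^ 4 / (81 * T ^ 4)"
    unfolding b_def using T cc by (simp add: field_simps power2_eq_square power4_eq_xxxx)
  finally show ?thesis unfolding b_def .
qed

lemma two_mul_minus_one_pow5_le: "1 \<le> n \<Longrightarrow> (2 * real n - 1) ^ 5 \<le> 16 * real n ^ 6"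
proof (cases "n = 1")
  case False
  assume "1 \<le> n"
  with False have n2: "2 \<le> real n" by simp
  have "(2 * real n - 1) ^ 5 \<le> (2 * real n) ^ 5" using n2 by (intro power_mono) auto
  also have "\<dots> = 16 * (2 * real n ^ 5)" by (simp add: power_mult_distrib)
  also have "\<dots> \<le> 16 * (real n * real n ^ 5)" using n2 by (intro mult_left_mono mult_right_mono) auto
  finally show ?thesis by (simp add: power_eq_if numeral_eq_Suc)
qed simp

lemma time_bound_arith:
  fixes y T :: real and n :: nat
  assumes n: "1 \<le> n" and y: "0 < y" "y \<le> 1" and T: "0 < T" "T \<le> 1"
  shows "(2 * (real n - 1) + 1) * (1 + 4 / T + 16384 * (2 + 2 * (2 * (real n - 1) / y)) ^ 4 / (81 * T ^ 4)) / y
    \<le> 85000 * real n ^ 6 / (y ^ 5 * T ^ 4)"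
proof -
  define K where "K = 2 * real n - 1"
  define cc where "cc = 2 + 2 * (2 * (real n - 1) / y)"
  have K1: "1 \<le> K" using n unfolding K_def by simp
  have "cc * y \<le> 2 * K" unfolding cc_def K_def using y by (simp add: field_simps)
  then have "cc \<le> 2 * K / y" using y by (simp add: field_simps)
  moreover have "0 \<le> cc" unfolding cc_def using n y by simp
  ultimately have "cc ^ 4 \<le> (2 * K / y) ^ 4" by (intro power_mono)
  then have cc4: "cc ^ 4 \<le> 16 * K ^ 4 / y ^ 4" by (simp add: power_divide power_mult_distrib)
  have yT: "0 < y ^ 4 * T ^ 4" "y ^ 4 * T ^ 4 \<le> T" "y ^ 4 * T ^ 4 \<le> 1"
    using y T mult_mono[of "y ^ 4" 1 "T ^ 4" T] power_decreasing[of 1 4 T]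
    by (auto simp: power_le_one mult_le_one)
  have "16384 * cc ^ 4 / (81 * T ^ 4) \<le> 16384 * (16 * K ^ 4 / y ^ 4) / (81 * T ^ 4)"
    using cc4 T by (intro divide_right_mono mult_left_mono) auto
  moreover have "1 \<le> 1 / (y ^ 4 * T ^ 4)" using yT by (simp add: le_divide_eq)
  moreover have "4 / T \<le> 4 / (y ^ 4 * T ^ 4)" using yT T by (intro divide_left_mono) auto
  moreover have "16384 * (16 * K ^ 4 / y ^ 4) / (81 * T ^ 4) = 262144 / 81 * K ^ 4 / (y ^ 4 * T ^ 4)"
    by (simp add: field_simps)
  ultimately have "1 + 4 / T + 16384 * cc ^ 4 / (81 * T ^ 4) \<le>
      1 / (y ^ 4 * T ^ 4) + 4 / (y ^ 4 * T ^ 4) + 262144 / 81 * K ^ 4 / (y ^ 4 * T ^ 4)"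
    by linarith
  also have "\<dots> = (5 + 262144 / 81 * K ^ 4) / (y ^ 4 * T ^ 4)" by (simp add: add_divide_distrib)
  finally have bracket: "1 + 4 / T + 16384 * cc ^ 4 / (81 * T ^ 4) \<le> (5 + 262144 / 81 * K ^ 4) / (y ^ 4 * T ^ 4)" .
  have "(2 * (real n - 1) + 1) * (1 + 4 / T + 16384 * cc ^ 4 / (81 * T ^ 4)) / y
      = K * (1 + 4 / T + 16384 * cc ^ 4 / (81 * T ^ 4)) / y"
    unfolding K_def by simp
  also have "\<dots> \<le> K * ((5 + 262144 / 81 * K ^ 4) / (y ^ 4 * T ^ 4)) / y"
    using bracket K1 y by (intro divide_right_mono mult_left_mono) auto
  also have "\<dots> = (5 * K + 262144 / 81 * K ^ 5) / (y ^ 5 * T ^ 4)"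
    using y T by (simp add: field_simps power_eq_if numeral_eq_Suc)
  also have "\<dots> \<le> (10 * real n ^ 6 + 262144 / 81 * (16 * real n ^ 6)) / (y ^ 5 * T ^ 4)"
  proof (intro divide_right_mono add_mono mult_left_mono)
    have "real n \<le> real n ^ 6" using n by (intro self_le_power) auto
    moreover have "5 * K \<le> 10 * real n" unfolding K_def by simp
    ultimately show "5 * K \<le> 10 * real n ^ 6" by linarith
    show "K ^ 5 \<le> 16 * real n ^ 6" using two_mul_minus_one_pow5_le[OF n] unfolding K_def .
  qed (use y T in auto)
  also have "\<dots> \<le> 85000 * real n ^ 6 / (y ^ 5 * T ^ 4)"
    using y T by (intro divide_right_mono) auto
  finally show ?thesis unfolding cc_def .
qed

lemma power_bound_shift:
  fixes x c T :: real and n :: nat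
  assumes x: "0 < x" "x \<le> 1" and T: "T \<noteq> 0" and c: "0 \<le> c" and n: "1 \<le> n"
  shows "c / ((x ^ (n - 1)) ^ 5 * \<bar>T\<bar> ^ 4) / x ^ (n ^ 3) \<le> c / (x ^ (5 * n + n ^ 3) * T ^ 4)"
proof -
  have "x ^ (5 * n + n ^ 3) \<le> x ^ ((n - 1) * 5 + n ^ 3)"
    using x n by (intro power_decreasing) auto
  from mult_right_mono[OF this, of "T ^ 4"]
  have "x ^ (5 * n + n ^ 3) * T ^ 4 \<le> (x ^ (n - 1)) ^ 5 * \<bar>T\<bar> ^ 4 * x ^ (n ^ 3)"
    by (simp add: power_mult power_add power_even_abs_numeral mult_ac)
  then show ?thesis using x T c by (simp add: divide_left_mono mult_pos_pos)
qed

context poc_bscc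
begin

lemma weighted_hit_series_le:
  assumes qB: "q \<in> B" and t0: "t \<noteq> 0" and reach: "(p, q) \<in> (X_edges Pp)\<^sup>*"
  shows "summable (\<lambda>m. real m * hit q m (p, 1))"
    and "(\<Sum>m. real m * hit q m (p, 1)) \<le> 85000 * real CARD('q) ^ 6 / ((xm ^ (CARD('q) - 1)) ^ 5 * \<bar>t\<bar> ^ 4)"
proof -
  define n where "n = CARD('q)"
  define y where "y = xm ^ (n - 1)"
  define G0 where "G0 = 2 * (real n - 1) / y"
  have n: "1 \<le> n" unfolding n_def by (simp add: Suc_leI)
  have y: "0 < y" "y \<le> 1" unfolding y_def using x_min_pos x_min_le_1 by (auto simp: power_le_one)
  have T: "0 < \<bar>t\<bar>" "\<bar>t\<bar> \<le> 1" using t0 abs_trend_le_1 by auto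
  obtain g where g: "poisson g" "\<forall>r. \<bar>g r\<bar> \<le> G0"
    using poisson_solution_exists n unfolding G0_def y_def n_def by (auto simp: of_nat_diff)
  define S where "S = (2 * (real n - 1) + 1) * (1 + 4 / \<bar>t\<bar> + 2 * (1 + decay G0)\<^sup>2 / (decay G0)\<^sup>2) / y"
  have partial: "(\<Sum>m\<le>M. real m * hit q m (p, 1)) \<le> S" for M
    using partial_time_le[OF g qB t0 refl reach] n unfolding S_def y_def n_def by (simp add: of_nat_diff)
  have "0 \<le> G0" unfolding G0_def using n y by simp
  then have "2 * (1 + decay G0)\<^sup>2 / (decay G0)\<^sup>2 \<le> 16384 * (2 + 2 * G0) ^ 4 / (81 * \<bar>t\<bar> ^ 4)"
    using decay_constant_le[OF T, of "2 + 2 * G0"] unfolding decay_def by simp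
  then have "S \<le> (2 * (real n - 1) + 1) * (1 + 4 / \<bar>t\<bar> + 16384 * (2 + 2 * G0) ^ 4 / (81 * \<bar>t\<bar> ^ 4)) / y"
    unfolding S_def using n y by (intro divide_right_mono mult_left_mono add_left_mono) auto
  also have "\<dots> \<le> 85000 * real n ^ 6 / (y ^ 5 * \<bar>t\<bar> ^ 4)"
    unfolding G0_def by (rule time_bound_arith[OF n y T])
  finally show "summable (\<lambda>m. real m * hit q m (p, 1))"
    and "(\<Sum>m. real m * hit q m (p, 1)) \<le> 85000 * real CARD('q) ^ 6 / ((xm ^ (CARD('q) - 1)) ^ 5 * \<bar>t\<bar> ^ 4)"
    using summable_suminf_le_if_partial_sums_le[of "\<lambda>m. real m * hit q m (p, 1)", OF _ partial]
      first_hit_nonneg unfolding n_def y_def by auto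
qed

end

theorem mainTheorem5:
  fixes dz dp :: "('q::finite \<times> int \<times> 'q) set"
    and Pz Pp :: "'q \<Rightarrow> int \<Rightarrow> 'q \<Rightarrow> real"
    and p q :: 'q and B :: "'q set" and \<alpha> :: "'q \<Rightarrow> real"
  assumes "pOC dz dp Pz Pp"
    and "term_prob Pz Pp p q > 0"
    and "is_bscc Pp B" and "q \<in> B"
    and "is_inv_dist Pp B \<alpha>"
    and "trend Pp B \<alpha> \<noteq> 0"
  shows "summable (\<lambda>n. real n * first_hit Pz Pp q n (p, 1)) \<and>
         exp_time Pz Pp p q \<le>
           85000 * real CARD('q) ^ 6 /
           (x_min dz dp Pz Pp ^ (5 * CARD('q) + CARD('q) ^ 3) * trend Pp B \<alpha> ^ 4)"
proof -
  interpret poc_bscc dz dp Pz Pp B \<alpha>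
    using assms by unfold_locales auto
  have "(p, q) \<in> (X_edges Pp)\<^sup>*"
    using assms(2) first_hit_eq_0_if_unreachable unfolding term_prob_def by force
  note series = weighted_hit_series_le[OF assms(4,6) this]
  have "exp_time Pz Pp p q \<le>
      85000 * real CARD('q) ^ 6 / ((xm ^ (CARD('q) - 1)) ^ 5 * \<bar>t\<bar> ^ 4) / xm ^ (CARD('q) ^ 3)"
    unfolding exp_time_def
    using series suminf_nonneg[OF series(1)] first_hit_nonneg term_prob_ge_x_min_pow[OF assms(2)] x_min_pos
    by (intro frac_le) (auto intro: order_trans)
  also have "\<dots> \<le> 85000 * real CARD('q) ^ 6 / (xm ^ (5 * CARD('q) + CARD('q) ^ 3) * t ^ 4)"
    using x_min_pos x_min_le_1 assms(6) by (intro power_bound_shift) (auto simp: Suc_leI)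
  finally show ?thesis using series(1) by simp
qed

end
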